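(* Let $p\in(2,3)$ and let $\beta=(\beta^1,\beta^2)$ be either the Itô or the Stratonovich enhanced Brownian motion over $d$-dimensional Brownian motion. Fix $i,j\in\{1,\dots,d\}$ and set $Z_{s,t}=\beta^{2,ij}_{s,t}/|t-s|^{2/p}$ for $0\le s<t\le1$ and $Z_{s,t}=0$ otherwise. Then there is a constant $c=c(p)$ such that for all $s,t,s',t'\in[0,1]$, $$E\big[|Z_{s,t}-Z_{s',t'}|^2\big]\le c\,\big[|s'-s|+|t'-t|\big]^{2(1-2/p)}.$$
   Context: Let $\omega$ be a $d$-dimensional Brownian motion on $[0,1]$ on Wiener space $(C([0,1],\mathbb{R}^d),\mu)$, with expectation $E$. Enhanced Brownian motion: $\beta^1_{s,t}=\omega_t-\omega_s$ and $\beta^{2,ij}_{s,t}=\int_s^t(\omega^i_r-\omega^i_s)\circ d\omega^j_r$ (Stratonovich) or $\int_s^t(\omega^i_r-\omega^i_s)\,d\omega^j_r$ (Itô), for $0\le s\le t\le 1$, taken in a version continuous in $(s,t)$. *)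

theory Defs
  imports "HOL-Probability.Probability"
begin

definition brownian_motion ::
  "'a measure \<Rightarrow> nat \<Rightarrow> (nat \<Rightarrow> real \<Rightarrow> 'a \<Rightarrow> real) \<Rightarrow> bool" where
  "brownian_motion M d W \<longleftrightarrow>
     prob_space M \<and>
     (\<forall>i\<in>{1..d}. \<forall>t\<in>{0..1}. W i t \<in> borel_measurable M) \<and>
     (\<forall>i\<in>{1..d}. \<forall>\<omega>\<in>space M. W i 0 \<omega> = 0) \<and>
     (\<forall>i\<in>{1..d}. \<forall>\<omega>\<in>space M. continuous_on {0..1} (\<lambda>t. W i t \<omega>)) \<and>
     (\<forall>(n::nat) (ts::nat \<Rightarrow> real).
        (\<forall>k<n. ts k < ts (Suc k)) \<and> 0 \<le> ts 0 \<and> ts n \<le> 1 \<longrightarrow>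
        prob_space.indep_vars M (\<lambda>_. borel)
          (\<lambda>(i, k) \<omega>. W i (ts (Suc k)) \<omega> - W i (ts k) \<omega>) ({1..d} \<times> {..<n}) \<and>
        (\<forall>i\<in>{1..d}. \<forall>k<n.
           distributed M lborel (\<lambda>\<omega>. W i (ts (Suc k)) \<omega> - W i (ts k) \<omega>)
             (\<lambda>x. ennreal (normal_density 0 (sqrt (ts (Suc k) - ts k)) x))))"

definition dyad :: "real \<Rightarrow> real \<Rightarrow> nat \<Rightarrow> nat \<Rightarrow> real" where
  "dyad s t n k = s + real k * (t - s) / 2 ^ n"

definition lvl2_sum ::
  "bool \<Rightarrow> (nat \<Rightarrow> real \<Rightarrow> 'a \<Rightarrow> real) \<Rightarrow> nat \<Rightarrow> nat \<Rightarrow> real \<Rightarrow> real \<Rightarrow> nat \<Rightarrow> 'a \<Rightarrow> real" where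
  "lvl2_sum strat W i j s t n \<omega> =
     (\<Sum>k<2^n.
        ((if strat then (W i (dyad s t n k) \<omega> + W i (dyad s t n (Suc k)) \<omega>) / 2
          else W i (dyad s t n k) \<omega>) - W i s \<omega>)
        * (W j (dyad s t n (Suc k)) \<omega> - W j (dyad s t n k) \<omega>))"

text \<open>Second level of enhanced Brownian motion (strat = True: Stratonovich,
  strat = False: Ito), defined as the (almost sure) limit of the dyadic Riemann sums.\<close>
definition beta2 ::
  "bool \<Rightarrow> (nat \<Rightarrow> real \<Rightarrow> 'a \<Rightarrow> real) \<Rightarrow> nat \<Rightarrow> nat \<Rightarrow> real \<Rightarrow> real \<Rightarrow> 'a \<Rightarrow> real" where
  "beta2 strat W i j s t \<omega> = lim (\<lambda>n. lvl2_sum strat W i j s t n \<omega>)"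

definition Zproc ::
  "real \<Rightarrow> bool \<Rightarrow> (nat \<Rightarrow> real \<Rightarrow> 'a \<Rightarrow> real) \<Rightarrow> nat \<Rightarrow> nat \<Rightarrow> real \<Rightarrow> real \<Rightarrow> 'a \<Rightarrow> real" where
  "Zproc p strat W i j s t \<omega> =
     (if 0 \<le> s \<and> s < t \<and> t \<le> 1 then beta2 strat W i j s t \<omega> / (t - s) powr (2 / p) else 0)"

end

(*
  Fix a finite grid refining the dyadic points of both intervals. A dyadic Riemann sum of the
  second level is a quadratic form in the independent Gaussian grid increments of W i and W j,
  with an explicit kernel K(x, y); by Isserlis' formula its second moment is at most the
  squared trace of K plus twice the squared discrete L^2 norm of K. The dyadic kernels differ
  from the simplex kernel of the iterated integral only on the diagonal dyadic blocks, of total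
  area (t - s)^2 / 2^n. Hence consecutive dyadic sums are 2^(-n/2)-close in L^2, so they converge
  almost surely to beta2. For two normalised sums, with \<delta> = |s' - s| + |t' - t|: if one of
  the intervals has length at most 4 \<delta>, both lengths are at most 5 \<delta> and each sum is
  small on its own; otherwise the simplex kernels and the normalising powers of the two
  intervals differ by O(\<delta>), which gives the bound C \<delta>^(2 - 4/p) up to a 16/2^n error.
  Fatou's lemma carries the bound over to the limit.
*)

theory Submission
  imports Defs "HOL-Library.Multiset"
begin

lemma square_add_le: "((a::real) + b)\<^sup>2 \<le> 2 * (a\<^sup>2 + b\<^sup>2)"
proof -
  have "0 \<le> (a - b)\<^sup>2" by simp
  then show ?thesis by (simp add: power2_eq_square algebra_simps)
qed

lemma square_add4_le: "((a::real) + b + c + d)\<^sup>2 \<le> 4 * (a\<^sup>2 + b\<^sup>2 + c\<^sup>2 + d\<^sup>2)"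
proof -
  have "0 \<le> (a - b)\<^sup>2 + (a - c)\<^sup>2 + (a - d)\<^sup>2 + (b - c)\<^sup>2 + (b - d)\<^sup>2 + (c - d)\<^sup>2" by simp
  then show ?thesis by (simp add: power2_eq_square algebra_simps)
qed

lemma abs_eq_max_minus_min: "\<bar>x - y\<bar> = max x y - min x y" for x y :: real
  by (simp add: abs_if max_def min_def)

lemma ratio_le_ratio_powr:
  fixes a b r :: real
  assumes "0 < a" "a \<le> b" "0 \<le> r" "r \<le> 1"
  shows "a / b \<le> (a / b) powr r"
proof -
  have "(a / b) powr 1 \<le> (a / b) powr r"
    using assms by (intro powr_mono') auto
  then show ?thesis using assms by simp
qed

lemma powr_diff_le:
  fixes a b r :: real
  assumes a: "0 < a" "a \<le> b" and r: "0 \<le> r" "r \<le> 1"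
  shows "b powr r - a powr r \<le> b powr (r - 1) * (b - a)"
proof -
  have b: "0 < b" using a by simp
  have "b powr r * (a / b) \<le> b powr r * (a / b) powr r"
    using ratio_le_ratio_powr[OF a r] by (intro mult_left_mono) auto
  also have "\<dots> = a powr r" using a b by (simp add: powr_divide)
  finally have "b powr r - a powr r \<le> b powr r / b * (b - a)"
    using b by (simp add: field_simps)
  also have "b powr r / b = b powr (r - 1)" using b by (simp add: powr_diff)
  finally show ?thesis .
qed

lemma powr_neg_diff_le:
  fixes a b q :: real
  assumes a: "0 < a" "a \<le> b" and q: "0 \<le> q" "q \<le> 1"
  shows "a powr (-q) - b powr (-q) \<le> a powr (-q) * (b - a) / b"
proof -
  have b: "0 < b" using a by simp
  have "a powr (-q) * (a / b) \<le> a powr (-q) * (a / b) powr q"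
    using ratio_le_ratio_powr[OF a q] by (intro mult_left_mono) auto
  also have "\<dots> = b powr (-q)" using a b by (simp add: powr_divide powr_minus field_simps)
  finally show ?thesis using b by (simp add: field_simps)
qed

lemma powr_neg_square: "(h powr (-q))\<^sup>2 = h powr (-2 * q)" for h q :: real
proof -
  have "(h powr (-q))\<^sup>2 = h powr (-q + -q)"
    unfolding power2_eq_square by (rule powr_add[symmetric])
  then show ?thesis by simp
qed

lemma powr_neg_times_square: "0 < h \<Longrightarrow> (h powr (-q))\<^sup>2 * h\<^sup>2 = h powr (2 - 2 * q)" for h q :: real
proof -
  assume h: "0 < h"
  have "(h powr (-q))\<^sup>2 * h\<^sup>2 = h powr (-2 * q) * h powr 2"
    using h powr_realpow[of h 2] by (simp add: powr_neg_square)
  also have "\<dots> = h powr (-2 * q + 2)" by (rule powr_add[symmetric])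
  finally show ?thesis by simp
qed

lemma powr_neg_times_self: "0 < h \<Longrightarrow> h powr (-q) * h = h powr (1 - q)" for h q :: real
  by (simp add: powr_mult_base mult.commute)

lemma powr_neg_times_square_le:
  fixes m d q :: real
  assumes "0 < d" "d \<le> m" "0 \<le> q"
  shows "m powr (-2 * q) * d\<^sup>2 \<le> d powr (2 - 2 * q)"
proof -
  have "m powr (-2 * q) * d\<^sup>2 \<le> d powr (-2 * q) * d\<^sup>2"
    using assms by (intro mult_right_mono powr_mono2') auto
  also have "\<dots> = d powr (2 - 2 * q)"
    using powr_neg_times_square[OF assms(1), of q] by (simp add: powr_neg_square)
  finally show ?thesis .
qed

lemma powr_increment_sq_le:
  fixes a b d q :: real
  assumes a: "0 < a" "a \<le> b" and d: "0 < d" "b - a \<le> d" "d \<le> a" and q: "0 \<le> q" "q \<le> 1"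
  shows "(b powr (1 - q) - a powr (1 - q))\<^sup>2 \<le> d powr (2 - 2 * q)"
proof -
  have "0 \<le> b powr (1 - q) - a powr (1 - q)" using a q by (simp add: powr_mono2)
  moreover have "b powr (1 - q) - a powr (1 - q) \<le> b powr (-q) * (b - a)"
    using powr_diff_le[OF a, of "1 - q"] q by simp
  moreover have "b powr (-q) * (b - a) \<le> a powr (-q) * d"
    using a d q by (intro mult_mono powr_mono2') auto
  ultimately have "(b powr (1 - q) - a powr (1 - q))\<^sup>2 \<le> (a powr (-q) * d)\<^sup>2"
    by (intro power_mono) auto
  also have "\<dots> = a powr (-2 * q) * d\<^sup>2" by (simp add: power_mult_distrib powr_neg_square)
  also have "\<dots> \<le> d powr (2 - 2 * q)" by (rule powr_neg_times_square_le[OF d(1,3) q(1)])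
  finally show ?thesis .
qed

lemma powr_neg_increment_sq_le:
  fixes a b d q h :: real
  assumes a: "0 < a" "a \<le> b" and d: "0 < d" "b - a \<le> d" "d \<le> a" and q: "0 \<le> q" "q \<le> 1"
    and h: "0 \<le> h" "h \<le> b"
  shows "(a powr (-q) - b powr (-q))\<^sup>2 * h\<^sup>2 \<le> d powr (2 - 2 * q)"
proof -
  have b: "0 < b" using a by simp
  have "0 \<le> a powr (-q) - b powr (-q)" using a q by (simp add: powr_mono2')
  then have "(a powr (-q) - b powr (-q))\<^sup>2 \<le> (a powr (-q) * (b - a) / b)\<^sup>2"
    using powr_neg_diff_le[OF a q] by (intro power_mono) auto
  moreover have "h\<^sup>2 \<le> b\<^sup>2" using h by (intro power_mono) auto
  ultimately have "(a powr (-q) - b powr (-q))\<^sup>2 * h\<^sup>2 \<le> (a powr (-q) * (b - a) / b)\<^sup>2 * b\<^sup>2"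
    by (intro mult_mono) auto
  also have "\<dots> = a powr (-2 * q) * (b - a)\<^sup>2"
    using b by (simp add: power_mult_distrib power_divide powr_neg_square)
  also have "\<dots> \<le> a powr (-2 * q) * d\<^sup>2" using a d by (intro mult_left_mono power_mono) auto
  also have "\<dots> \<le> d powr (2 - 2 * q)" by (rule powr_neg_times_square_le[OF d(1,3) q(1)])
  finally show ?thesis .
qed

lemma powr_one_minus_diff_sq_le:
  fixes h h' \<delta> q :: real
  assumes "0 < \<delta>" "\<bar>h - h'\<bar> \<le> \<delta>" "\<delta> \<le> h" "\<delta> \<le> h'" and q: "0 \<le> q" "q \<le> 1"
  shows "(h powr (1 - q) - h' powr (1 - q))\<^sup>2 \<le> \<delta> powr (2 - 2 * q)"
proof (cases "h \<le> h'")
  case True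
  then show ?thesis
    using powr_increment_sq_le[of h h' \<delta> q] assms by (simp add: power2_commute)
next
  case False
  then show ?thesis
    using powr_increment_sq_le[of h' h \<delta> q] assms by simp
qed

lemma powr_neg_diff_sq_times_le:
  fixes h h' \<delta> q :: real
  assumes "0 < \<delta>" "\<bar>h - h'\<bar> \<le> \<delta>" "\<delta> \<le> h" "\<delta> \<le> h'" and q: "0 \<le> q" "q \<le> 1"
  shows "(h powr (-q) - h' powr (-q))\<^sup>2 * h'\<^sup>2 \<le> \<delta> powr (2 - 2 * q)"
proof (cases "h \<le> h'")
  case True
  then show ?thesis
    using powr_neg_increment_sq_le[of h h' \<delta> q h'] assms by simp
next
  case False
  then show ?thesis
    using powr_neg_increment_sq_le[of h' h \<delta> q h'] assms by (simp add: power2_commute)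
qed

lemma powr_neg_sq_times_le:
  fixes h d q :: real
  assumes d: "0 < d" "d \<le> h" and q: "1/2 \<le> q"
  shows "(h powr (-q))\<^sup>2 * (d * (h + d)) \<le> 2 * d powr (2 - 2 * q)"
proof -
  have h: "0 < h" using d by simp
  have "(h powr (-q))\<^sup>2 * (d * (h + d)) \<le> h powr (-2 * q) * (d * (2 * h))"
    using d h by (simp add: powr_neg_square mult_left_mono)
  also have "\<dots> = 2 * d * (h * h powr (-2 * q))" by (simp add: mult_ac)
  also have "h * h powr (-2 * q) = h powr (1 - 2 * q)"
    using h powr_mult_base[of h "-2 * q"] by simp
  also have "2 * d * h powr (1 - 2 * q) \<le> 2 * d * d powr (1 - 2 * q)"
    using d q by (intro mult_left_mono powr_mono2') auto
  also have "2 * d * d powr (1 - 2 * q) = 2 * d powr (2 - 2 * q)"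
    using d powr_mult_base[of d "1 - 2 * q"] by simp
  finally show ?thesis .
qed

lemma powr_le_five_times:
  fixes h d g :: real
  assumes h: "0 < h" "h \<le> 5 * d" and g: "0 \<le> g" "g \<le> 1"
  shows "h powr g \<le> 5 * d powr g"
proof -
  have d: "0 < d" using h by simp
  have "h powr g \<le> (5 * d) powr g" using h g by (intro powr_mono2) auto
  also have "\<dots> = 5 powr g * d powr g" using d by (simp add: powr_mult)
  also have "5 powr g \<le> 5 powr 1" using g by (intro powr_mono) auto
  finally show ?thesis using d by (simp add: mult_right_mono)
qed

section \<open>Moments of independent centred Gaussians\<close>

definition normal_moment :: "real \<Rightarrow> nat \<Rightarrow> real" where
  "normal_moment v k = (if odd k then 0 else fact k / (2 ^ (k div 2) * fact (k div 2)) * v ^ (k div 2))"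

lemma
  fixes v :: real
  assumes v: "0 < v" and X: "distributed M lborel X (\<lambda>y. ennreal (normal_density 0 (sqrt v) y))"
  shows integrable_normal_power: "integrable M (\<lambda>\<omega>. X \<omega> ^ k)"
    and integral_normal_power: "(\<integral>\<omega>. X \<omega> ^ k \<partial>M) = normal_moment v k"
proof -
  have sv: "0 < sqrt v" using v by simp
  have "integrable lborel (\<lambda>y. normal_density 0 (sqrt v) y * y ^ k)"
    using integrable_normal_moment[OF sv, of 0 k] by simp
  then show "integrable M (\<lambda>\<omega>. X \<omega> ^ k)"
    using distributed_integrable[OF X, of "\<lambda>y. y ^ k"] by simp
  have "(\<integral>\<omega>. X \<omega> ^ k \<partial>M) = (\<integral>y. normal_density 0 (sqrt v) y * y ^ k \<partial>lborel)"
    using distributed_integral[OF X, of "\<lambda>y. y ^ k"] by simp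
  also have "\<dots> = normal_moment v k"
  proof (cases "odd k")
    case True
    then obtain m where "k = 2 * m + 1" by (auto elim: oddE)
    then show ?thesis using integral_normal_moment_odd[OF sv, of 0 m] True
      by (simp add: normal_moment_def)
  next
    case False
    then obtain m where k: "k = 2 * m" by (auto elim: evenE)
    have "(2 / (sqrt v)\<^sup>2) ^ m = 2 ^ m / v ^ m" using v by (simp add: power_divide)
    then show ?thesis using integral_normal_moment_even[OF sv, of 0 m] k v
      by (simp add: normal_moment_def)
  qed
  finally show "(\<integral>\<omega>. X \<omega> ^ k \<partial>M) = normal_moment v k" .
qed

lemma (in prob_space)
  assumes J: "finite J" and indep: "indep_vars (\<lambda>_. borel) X J"
    and normal: "\<And>x. x \<in> J \<Longrightarrow> distributed M lborel (X x) (\<lambda>y. ennreal (normal_density 0 (sqrt (v x)) y))"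
    and v: "\<And>x. x \<in> J \<Longrightarrow> 0 < v x"
  shows integrable_indep_normal_prod: "integrable M (\<lambda>\<omega>. \<Prod>x\<in>J. X x \<omega> ^ k x)"
    and integral_indep_normal_prod: "(\<integral>\<omega>. (\<Prod>x\<in>J. X x \<omega> ^ k x) \<partial>M) = (\<Prod>x\<in>J. normal_moment (v x) (k x))"
proof -
  have indep_pow: "indep_vars (\<lambda>_. borel) (\<lambda>x \<omega>. X x \<omega> ^ k x) J"
    by (rule indep_vars_compose2[OF indep]) auto
  have int: "\<And>x. x \<in> J \<Longrightarrow> integrable M (\<lambda>\<omega>. X x \<omega> ^ k x)"
    using integrable_normal_power[OF v normal] .
  show "integrable M (\<lambda>\<omega>. \<Prod>x\<in>J. X x \<omega> ^ k x)"
    by (rule indep_vars_integrable[OF J indep_pow int])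
  show "(\<integral>\<omega>. (\<Prod>x\<in>J. X x \<omega> ^ k x) \<partial>M) = (\<Prod>x\<in>J. normal_moment (v x) (k x))"
    using indep_vars_lebesgue_integral[OF J indep_pow int] integral_normal_power[OF v normal]
    by simp
qed

definition isserlis_pairing :: "('i \<Rightarrow> real) \<Rightarrow> 'i \<Rightarrow> 'i \<Rightarrow> 'i \<Rightarrow> 'i \<Rightarrow> real" where
  "isserlis_pairing v a b c e =
     of_bool (a = b \<and> c = e) * v a * v c + of_bool (a = c \<and> b = e) * v a * v b
     + of_bool (a = e \<and> b = c) * v a * v b"

lemma prod_normal_moment_mset4:
  "(\<Prod>x\<in>set_mset {#a, b, c, e#}. normal_moment (v x) (count {#a, b, c, e#} x))
     = isserlis_pairing v a b c e"
  unfolding isserlis_pairing_def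
  by (cases "a = b"; cases "a = c"; cases "a = e"; cases "b = c"; cases "b = e"; cases "c = e")
     (simp_all add: normal_moment_def fact_numeral power2_eq_square insert_commute)

lemma (in prob_space)
  assumes I: "finite I" and indep: "indep_vars (\<lambda>_. borel) X I"
    and normal: "\<And>x. x \<in> I \<Longrightarrow> distributed M lborel (X x) (\<lambda>y. ennreal (normal_density 0 (sqrt (v x)) y))"
    and v: "\<And>x. x \<in> I \<Longrightarrow> 0 < v x"
    and abce: "a \<in> I" "b \<in> I" "c \<in> I" "e \<in> I"
  shows integrable_indep_normal_prod4: "integrable M (\<lambda>\<omega>. X a \<omega> * X b \<omega> * X c \<omega> * X e \<omega>)"
    and isserlis4: "(\<integral>\<omega>. X a \<omega> * X b \<omega> * X c \<omega> * X e \<omega> \<partial>M) = isserlis_pairing v a b c e"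
proof -
  define N where "N = {#a, b, c, e#}"
  have J: "set_mset N \<subseteq> I" using abce by (simp add: N_def)
  have prod: "X a \<omega> * X b \<omega> * X c \<omega> * X e \<omega> = (\<Prod>x\<in>set_mset N. X x \<omega> ^ count N x)" for \<omega>
    using image_prod_mset_multiplicity[of "\<lambda>x. X x \<omega>" N] by (simp add: N_def mult_ac)
  note indep_J = indep_vars_subset[OF indep J]
  have normal_J: "\<And>x. x \<in> set_mset N \<Longrightarrow> distributed M lborel (X x) (\<lambda>y. ennreal (normal_density 0 (sqrt (v x)) y))"
    and v_J: "\<And>x. x \<in> set_mset N \<Longrightarrow> 0 < v x"
    using J normal v by auto
  show "integrable M (\<lambda>\<omega>. X a \<omega> * X b \<omega> * X c \<omega> * X e \<omega>)"
    unfolding prod by (rule integrable_indep_normal_prod[OF finite_set_mset indep_J normal_J v_J])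
  have "(\<integral>\<omega>. X a \<omega> * X b \<omega> * X c \<omega> * X e \<omega> \<partial>M)
      = (\<integral>\<omega>. (\<Prod>x\<in>set_mset N. X x \<omega> ^ count N x) \<partial>M)"
    by (simp only: prod)
  also have "\<dots> = (\<Prod>x\<in>set_mset N. normal_moment (v x) (count N x))"
    by (rule integral_indep_normal_prod[OF finite_set_mset indep_J normal_J v_J])
  also have "\<dots> = isserlis_pairing v a b c e"
    unfolding N_def by (rule prod_normal_moment_mset4)
  finally show "(\<integral>\<omega>. X a \<omega> * X b \<omega> * X c \<omega> * X e \<omega> \<partial>M) = isserlis_pairing v a b c e" .
qed

lemma sum_sum_delta:
  assumes "finite I" "x \<in> I" "y \<in> I"
  shows "(\<Sum>z\<in>I. \<Sum>w\<in>I. of_bool (z = x \<and> w = y) * F z w) = (F x y :: real)"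
proof -
  have "(\<Sum>z\<in>I. \<Sum>w\<in>I. of_bool (z = x \<and> w = y) * F z w)
      = (\<Sum>z\<in>I. if z = x then (\<Sum>w\<in>I. if w = y then F z w else 0) else 0)"
    by (intro sum.cong) (auto simp: of_bool_def if_distrib[of "\<lambda>u. u * _"] cong: if_cong)
  then show ?thesis using assms by simp
qed

lemma square_double_sum:
  fixes f :: "'i \<Rightarrow> 'i \<Rightarrow> real"
  shows "(\<Sum>x\<in>I. \<Sum>y\<in>I. f x y)\<^sup>2 = (\<Sum>x\<in>I. \<Sum>y\<in>I. \<Sum>z\<in>I. \<Sum>w\<in>I. f x y * f z w)"
proof -
  have "(\<Sum>x\<in>I. \<Sum>y\<in>I. f x y)\<^sup>2 = (\<Sum>x\<in>I. \<Sum>y\<in>I. f x y * (\<Sum>z\<in>I. \<Sum>w\<in>I. f z w))"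
    by (simp add: power2_eq_square sum_distrib_right)
  then show ?thesis by (simp add: sum_distrib_left)
qed

lemma sum4_isserlis_pairing:
  fixes A :: "'i \<Rightarrow> 'i \<Rightarrow> real"
  assumes I: "finite I"
  shows "(\<Sum>x\<in>I. \<Sum>y\<in>I. \<Sum>z\<in>I. \<Sum>w\<in>I. A x y * A z w * isserlis_pairing v x y z w)
     = (\<Sum>x\<in>I. A x x * v x)\<^sup>2 + (\<Sum>x\<in>I. \<Sum>y\<in>I. A x y * (A x y + A y x) * v x * v y)"
proof -
  have pairing: "A x y * A z w * isserlis_pairing v x y z w
      = (of_bool (x = y) * A x y * v x) * (of_bool (z = w) * A z w * v z)
        + of_bool (z = x \<and> w = y) * (A x y * A z w * v x * v y)
        + of_bool (z = y \<and> w = x) * (A x y * A z w * v x * v y)" for x y z w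
    by (simp add: isserlis_pairing_def of_bool_conj algebra_simps)
  have diag: "(\<Sum>x\<in>I. \<Sum>y\<in>I. of_bool (x = y) * A x y * v x) = (\<Sum>x\<in>I. A x x * v x)"
    using I by (simp add: of_bool_def if_distrib[of "\<lambda>u. u * _"] cong: if_cong)
  have pair_xz: "(\<Sum>x\<in>I. \<Sum>y\<in>I. \<Sum>z\<in>I. \<Sum>w\<in>I. of_bool (z = x \<and> w = y) * (A x y * A z w * v x * v y))
      = (\<Sum>x\<in>I. \<Sum>y\<in>I. A x y * A x y * v x * v y)"
    using I by (intro sum.cong refl sum_sum_delta)
  have pair_xw: "(\<Sum>x\<in>I. \<Sum>y\<in>I. \<Sum>z\<in>I. \<Sum>w\<in>I. of_bool (z = y \<and> w = x) * (A x y * A z w * v x * v y))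
      = (\<Sum>x\<in>I. \<Sum>y\<in>I. A x y * A y x * v x * v y)"
    using I by (intro sum.cong refl sum_sum_delta)
  have "(\<Sum>x\<in>I. \<Sum>y\<in>I. \<Sum>z\<in>I. \<Sum>w\<in>I. A x y * A z w * isserlis_pairing v x y z w)
      = (\<Sum>x\<in>I. \<Sum>y\<in>I. of_bool (x = y) * A x y * v x)\<^sup>2
        + (\<Sum>x\<in>I. \<Sum>y\<in>I. \<Sum>z\<in>I. \<Sum>w\<in>I. of_bool (z = x \<and> w = y) * (A x y * A z w * v x * v y))
        + (\<Sum>x\<in>I. \<Sum>y\<in>I. \<Sum>z\<in>I. \<Sum>w\<in>I. of_bool (z = y \<and> w = x) * (A x y * A z w * v x * v y))"
    by (simp only: pairing square_double_sum sum.distrib)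
  then show ?thesis
    unfolding diag pair_xz pair_xw by (simp add: distrib_left distrib_right sum.distrib)
qed

lemma (in prob_space)
  assumes I: "finite I" and indep: "indep_vars (\<lambda>_. borel) X I"
    and normal: "\<And>x. x \<in> I \<Longrightarrow> distributed M lborel (X x) (\<lambda>y. ennreal (normal_density 0 (sqrt (v x)) y))"
    and v: "\<And>x. x \<in> I \<Longrightarrow> 0 < v x"
  shows integrable_normal_quadratic_form_sq:
      "integrable M (\<lambda>\<omega>. (\<Sum>x\<in>I. \<Sum>y\<in>I. A x y * X x \<omega> * X y \<omega>)\<^sup>2)"
    and integral_normal_quadratic_form_sq:
      "(\<integral>\<omega>. (\<Sum>x\<in>I. \<Sum>y\<in>I. A x y * X x \<omega> * X y \<omega>)\<^sup>2 \<partial>M) =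
        (\<Sum>x\<in>I. A x x * v x)\<^sup>2 + (\<Sum>x\<in>I. \<Sum>y\<in>I. A x y * (A x y + A y x) * v x * v y)"
proof -
  have sq: "(\<Sum>x\<in>I. \<Sum>y\<in>I. A x y * X x \<omega> * X y \<omega>)\<^sup>2 =
    (\<Sum>x\<in>I. \<Sum>y\<in>I. \<Sum>z\<in>I. \<Sum>w\<in>I. A x y * A z w * (X x \<omega> * X y \<omega> * X z \<omega> * X w \<omega>))" for \<omega>
    unfolding square_double_sum by (simp add: mult_ac)
  have int4: "integrable M (\<lambda>\<omega>. A x y * A z w * (X x \<omega> * X y \<omega> * X z \<omega> * X w \<omega>))"
    if "x \<in> I" "y \<in> I" "z \<in> I" "w \<in> I" for x y z w
    using integrable_indep_normal_prod4[OF I indep normal v that] by simp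
  show "integrable M (\<lambda>\<omega>. (\<Sum>x\<in>I. \<Sum>y\<in>I. A x y * X x \<omega> * X y \<omega>)\<^sup>2)"
    unfolding sq by (intro Bochner_Integration.integrable_sum int4)
  have "(\<integral>\<omega>. (\<Sum>x\<in>I. \<Sum>y\<in>I. A x y * X x \<omega> * X y \<omega>)\<^sup>2 \<partial>M) =
     (\<Sum>x\<in>I. \<Sum>y\<in>I. \<Sum>z\<in>I. \<Sum>w\<in>I. A x y * A z w * isserlis_pairing v x y z w)"
    unfolding sq
    by (simp add: integrable_indep_normal_prod4[OF I indep normal v] isserlis4[OF I indep normal v])
  then show "(\<integral>\<omega>. (\<Sum>x\<in>I. \<Sum>y\<in>I. A x y * X x \<omega> * X y \<omega>)\<^sup>2 \<partial>M) =
        (\<Sum>x\<in>I. A x x * v x)\<^sup>2 + (\<Sum>x\<in>I. \<Sum>y\<in>I. A x y * (A x y + A y x) * v x * v y)"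
    by (simp add: sum4_isserlis_pairing[OF I])
qed

lemma (in prob_space) integral_normal_quadratic_form_sq_le:
  assumes I: "finite I" and indep: "indep_vars (\<lambda>_. borel) X I"
    and normal: "\<And>x. x \<in> I \<Longrightarrow> distributed M lborel (X x) (\<lambda>y. ennreal (normal_density 0 (sqrt (v x)) y))"
    and v: "\<And>x. x \<in> I \<Longrightarrow> 0 < v x"
  shows "(\<integral>\<omega>. (\<Sum>x\<in>I. \<Sum>y\<in>I. A x y * X x \<omega> * X y \<omega>)\<^sup>2 \<partial>M) \<le>
      (\<Sum>x\<in>I. A x x * v x)\<^sup>2 + 2 * (\<Sum>x\<in>I. \<Sum>y\<in>I. (A x y)\<^sup>2 * v x * v y)"
proof -
  define P where "P x y = (A x y)\<^sup>2 * v x * v y" for x y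
  have "A x y * A y x * v x * v y \<le> (P x y + P y x) / 2" if "x \<in> I" "y \<in> I" for x y
  proof -
    have "0 \<le> (A x y - A y x)\<^sup>2 * (v x * v y)" using v that by (simp add: less_imp_le)
    then show ?thesis by (simp add: P_def power2_eq_square algebra_simps)
  qed
  then have "(\<Sum>x\<in>I. \<Sum>y\<in>I. A x y * A y x * v x * v y) \<le> (\<Sum>x\<in>I. \<Sum>y\<in>I. (P x y + P y x) / 2)"
    by (intro sum_mono) auto
  also have "\<dots> = ((\<Sum>x\<in>I. \<Sum>y\<in>I. P x y) + (\<Sum>x\<in>I. \<Sum>y\<in>I. P y x)) / 2"
    by (simp add: sum.distrib add_divide_distrib sum_divide_distrib)
  also have "\<dots> = (\<Sum>x\<in>I. \<Sum>y\<in>I. P x y)"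
    using sum.swap[of P I I] by simp
  finally have cross: "(\<Sum>x\<in>I. \<Sum>y\<in>I. A x y * A y x * v x * v y) \<le> (\<Sum>x\<in>I. \<Sum>y\<in>I. P x y)" .
  have "(\<Sum>x\<in>I. \<Sum>y\<in>I. A x y * (A x y + A y x) * v x * v y)
      = (\<Sum>x\<in>I. \<Sum>y\<in>I. P x y) + (\<Sum>x\<in>I. \<Sum>y\<in>I. A x y * A y x * v x * v y)"
    by (simp add: P_def power2_eq_square algebra_simps sum.distrib)
  then show ?thesis
    using integral_normal_quadratic_form_sq[OF I indep normal v, of A] cross by (simp add: P_def)
qed

section \<open>Almost sure limits from second-moment bounds\<close>

lemma (in prob_space) AE_convergent_if_summable_increments:
  fixes S :: "nat \<Rightarrow> 'a \<Rightarrow> real"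
  assumes [measurable]: "\<And>n. S n \<in> borel_measurable M"
    and summable: "(\<Sum>n. \<integral>\<^sup>+\<omega>. ennreal \<bar>S (Suc n) \<omega> - S n \<omega>\<bar> \<partial>M) \<noteq> \<infinity>"
  shows "AE \<omega> in M. convergent (\<lambda>n. S n \<omega>)"
proof -
  have "(\<integral>\<^sup>+\<omega>. (\<Sum>n. ennreal \<bar>S (Suc n) \<omega> - S n \<omega>\<bar>) \<partial>M) \<noteq> \<infinity>"
    using summable by (subst nn_integral_suminf) auto
  then have "AE \<omega> in M. (\<Sum>n. ennreal \<bar>S (Suc n) \<omega> - S n \<omega>\<bar>) \<noteq> \<infinity>"
    by (intro nn_integral_PInf_AE) auto
  then show ?thesis
  proof eventually_elim
    case (elim \<omega>)
    then have "summable (\<lambda>n. \<bar>S (Suc n) \<omega> - S n \<omega>\<bar>)"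
      by (intro summable_suminf_not_top) auto
    then have "summable (\<lambda>n. S (Suc n) \<omega> - S n \<omega>)"
      by (rule summable_rabs_cancel)
    then have "convergent (\<lambda>n. \<Sum>k<n. S (Suc k) \<omega> - S k \<omega>)"
      by (simp only: summable_iff_convergent)
    then have "convergent (\<lambda>n. S 0 \<omega> + (\<Sum>k<n. S (Suc k) \<omega> - S k \<omega>))"
      by (intro convergent_add convergent_const)
    then show ?case
      by (simp add: sum_lessThan_telescope[of "\<lambda>k. S k \<omega>"])
  qed
qed

lemma (in prob_space) nn_integral_abs_le:
  fixes X :: "'a \<Rightarrow> real"
  assumes X: "integrable M (\<lambda>\<omega>. (X \<omega>)\<^sup>2)" and L: "0 < L"
  shows "(\<integral>\<^sup>+\<omega>. ennreal \<bar>X \<omega>\<bar> \<partial>M) \<le> ennreal ((L * (\<integral>\<omega>. (X \<omega>)\<^sup>2 \<partial>M) + 1 / L) / 2)"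
proof -
  have "\<bar>x\<bar> \<le> (L * x\<^sup>2 + 1 / L) / 2" for x :: real
  proof -
    have "0 \<le> (L * \<bar>x\<bar> - 1)\<^sup>2 / L" using L by simp
    also have "\<dots> = L * x\<^sup>2 + 1 / L - 2 * \<bar>x\<bar>"
      using L by (simp add: power2_eq_square field_simps)
    finally show ?thesis by simp
  qed
  then have "(\<integral>\<^sup>+\<omega>. ennreal \<bar>X \<omega>\<bar> \<partial>M) \<le> (\<integral>\<^sup>+\<omega>. ennreal ((L * (X \<omega>)\<^sup>2 + 1 / L) / 2) \<partial>M)"
    by (intro nn_integral_mono ennreal_leI)
  also have "\<dots> = ennreal (\<integral>\<omega>. (L * (X \<omega>)\<^sup>2 + 1 / L) / 2 \<partial>M)"
    using X L by (intro nn_integral_eq_integral) auto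
  also have "(\<integral>\<omega>. (L * (X \<omega>)\<^sup>2 + 1 / L) / 2 \<partial>M) = (L * (\<integral>\<omega>. (X \<omega>)\<^sup>2 \<partial>M) + 1 / L) / 2"
    using X by (simp add: prob_space)
  finally show ?thesis .
qed

lemma (in prob_space) AE_convergent_if_increments_sq_le:
  fixes S :: "nat \<Rightarrow> 'a \<Rightarrow> real"
  assumes [measurable]: "\<And>n. S n \<in> borel_measurable M"
    and int: "\<And>n. integrable M (\<lambda>\<omega>. (S (Suc n) \<omega> - S n \<omega>)\<^sup>2)"
    and bound: "\<And>n. (\<integral>\<omega>. (S (Suc n) \<omega> - S n \<omega>)\<^sup>2 \<partial>M) \<le> C / 2^n"
  shows "AE \<omega> in M. convergent (\<lambda>n. S n \<omega>)"
proof (rule AE_convergent_if_summable_increments)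
  define r where "r = 1 / sqrt 2"
  have r: "0 < r" "r < 1" by (auto simp: r_def)
  have "0 \<le> (\<integral>\<omega>. (S (Suc 0) \<omega> - S 0 \<omega>)\<^sup>2 \<partial>M)"
    by (intro integral_nonneg_AE) simp
  then have "0 \<le> C" using order_trans[OF _ bound[of 0]] by simp
  have increment: "(\<integral>\<^sup>+\<omega>. ennreal \<bar>S (Suc n) \<omega> - S n \<omega>\<bar> \<partial>M) \<le> ennreal ((C + 1) / 2 * r^n)" for n
  proof -
    (* This choice of L balances the two terms of nn_integral_abs_le. *)
    define L where "L = sqrt 2 ^ n"
    have L: "0 < L" "1 / L = r^n" "C / 2^n * L = C * r^n"
      by (simp_all add: L_def r_def power_divide field_simps flip: power_mult_distrib)
    have "(\<integral>\<^sup>+\<omega>. ennreal \<bar>S (Suc n) \<omega> - S n \<omega>\<bar> \<partial>M)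
        \<le> ennreal ((L * (\<integral>\<omega>. (S (Suc n) \<omega> - S n \<omega>)\<^sup>2 \<partial>M) + 1 / L) / 2)"
      by (rule nn_integral_abs_le[OF int L(1)])
    also have "\<dots> \<le> ennreal ((L * (C / 2^n) + 1 / L) / 2)"
      using bound[of n] L(1) by (intro ennreal_leI divide_right_mono add_right_mono mult_left_mono) auto
    also have "\<dots> = ennreal ((C + 1) / 2 * r^n)"
      using L by (simp add: algebra_simps add_divide_distrib)
    finally show ?thesis .
  qed
  have "summable (\<lambda>n. (C + 1) / 2 * r^n)"
    using r by (intro summable_mult summable_geometric) simp
  then have "(\<Sum>n. ennreal ((C + 1) / 2 * r^n)) \<noteq> \<top>"
    by (rule ennreal_suminf_neq_top) (use \<open>0 \<le> C\<close> r in auto)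
  moreover have "(\<Sum>n. \<integral>\<^sup>+\<omega>. ennreal \<bar>S (Suc n) \<omega> - S n \<omega>\<bar> \<partial>M) \<le> (\<Sum>n. ennreal ((C + 1) / 2 * r^n))"
    by (intro suminf_le increment summableI)
  ultimately show "(\<Sum>n. \<integral>\<^sup>+\<omega>. ennreal \<bar>S (Suc n) \<omega> - S n \<omega>\<bar> \<partial>M) \<noteq> \<infinity>"
    by (auto simp: top_unique)
qed simp

lemma nn_integral_sq_le_if_AE_tendsto:
  fixes f :: "nat \<Rightarrow> 'a \<Rightarrow> real"
  assumes [measurable]: "\<And>n. f n \<in> borel_measurable M"
    and lim: "AE \<omega> in M. (\<lambda>n. f n \<omega>) \<longlonglongrightarrow> F \<omega>"
    and int: "\<And>n. integrable M (\<lambda>\<omega>. (f n \<omega>)\<^sup>2)"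
    and bound: "\<And>n. (\<integral>\<omega>. (f n \<omega>)\<^sup>2 \<partial>M) \<le> B + e n" and e: "e \<longlonglongrightarrow> 0"
  shows "(\<integral>\<^sup>+\<omega>. ennreal ((F \<omega>)\<^sup>2) \<partial>M) \<le> ennreal B"
proof -
  have "(\<integral>\<^sup>+\<omega>. ennreal ((F \<omega>)\<^sup>2) \<partial>M) = (\<integral>\<^sup>+\<omega>. liminf (\<lambda>n. ennreal ((f n \<omega>)\<^sup>2)) \<partial>M)"
  proof (rule nn_integral_cong_AE)
    show "AE \<omega> in M. ennreal ((F \<omega>)\<^sup>2) = liminf (\<lambda>n. ennreal ((f n \<omega>)\<^sup>2))"
      using lim
    proof eventually_elim
      case (elim \<omega>)
      then have "(\<lambda>n. ennreal ((f n \<omega>)\<^sup>2)) \<longlonglongrightarrow> ennreal ((F \<omega>)\<^sup>2)"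
        by (intro tendsto_ennrealI tendsto_power)
      then show ?case by (rule lim_imp_Liminf[OF trivial_limit_sequentially, symmetric])
    qed
  qed
  also have "\<dots> \<le> liminf (\<lambda>n. \<integral>\<^sup>+\<omega>. ennreal ((f n \<omega>)\<^sup>2) \<partial>M)"
    by (rule nn_integral_liminf) measurable
  also have "\<dots> = liminf (\<lambda>n. ennreal (\<integral>\<omega>. (f n \<omega>)\<^sup>2 \<partial>M))"
    using int by (simp add: nn_integral_eq_integral)
  also have "\<dots> \<le> liminf (\<lambda>n. ennreal (B + e n))"
    by (intro Liminf_mono always_eventually allI ennreal_leI bound)
  also have "\<dots> = ennreal B"
  proof -
    have "(\<lambda>n. ennreal (B + e n)) \<longlonglongrightarrow> ennreal B"
      using tendsto_add[OF tendsto_const e, of B] by (intro tendsto_ennrealI) simp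
    then show ?thesis by (rule lim_imp_Liminf[OF trivial_limit_sequentially])
  qed
  finally show ?thesis .
qed

section \<open>Grids and discrete double Wiener integrals\<close>

(* The points of a finite set G in increasing order are grid G 0, ..., grid G (grid_cells G). *)
definition grid :: "real set \<Rightarrow> nat \<Rightarrow> real" where
  "grid G k = sorted_list_of_set G ! k"

definition grid_cells :: "real set \<Rightarrow> nat" where
  "grid_cells G = card G - 1"

definition cell_length :: "real set \<Rightarrow> nat \<Rightarrow> real" where
  "cell_length G m = grid G (Suc m) - grid G m"

definition grid_integral :: "real set \<Rightarrow> (real \<Rightarrow> real) \<Rightarrow> real" where
  "grid_integral G f = (\<Sum>m<grid_cells G. f (grid G m) * cell_length G m)"

definition grid_integral2 :: "real set \<Rightarrow> (real \<Rightarrow> real \<Rightarrow> real) \<Rightarrow> real" where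
  "grid_integral2 G F =
     (\<Sum>m<grid_cells G. \<Sum>l<grid_cells G. F (grid G m) (grid G l) * cell_length G m * cell_length G l)"

lemma grid_integral_cmult: "grid_integral G (\<lambda>x. c * f x) = c * grid_integral G f"
  unfolding grid_integral_def by (simp add: sum_distrib_left mult.assoc)

lemma grid_integral_diff:
  "grid_integral G (\<lambda>x. a * f x - b * g x) = a * grid_integral G f - b * grid_integral G g"
  unfolding grid_integral_def by (simp add: sum_distrib_left sum_subtractf left_diff_distrib mult.assoc)

lemma grid_integral2_add: "grid_integral2 G (\<lambda>x y. F x y + F' x y) = grid_integral2 G F + grid_integral2 G F'"
  unfolding grid_integral2_def by (simp add: distrib_right sum.distrib)

lemma grid_integral2_cmult: "grid_integral2 G (\<lambda>x y. c * F x y) = c * grid_integral2 G F"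
  unfolding grid_integral2_def by (simp add: sum_distrib_left mult_ac)

lemma grid_integral2_product: "grid_integral2 G (\<lambda>x y. f x * g y) = grid_integral G f * grid_integral G g"
  unfolding grid_integral2_def grid_integral_def by (simp add: sum_product mult_ac)

context
  fixes G :: "real set"
  assumes finite_G: "finite G" and G_ne: "G \<noteq> {}"
begin

lemma length_sorted_list_of_set_grid: "length (sorted_list_of_set G) = Suc (grid_cells G)"
  using finite_G G_ne by (simp add: grid_cells_def card_gt_0_iff)

lemma grid_less: "m < m' \<Longrightarrow> m' \<le> grid_cells G \<Longrightarrow> grid G m < grid G m'"
  unfolding grid_def
  by (rule sorted_wrt_nth_less[OF strict_sorted_list_of_set]) (use length_sorted_list_of_set_grid in auto)

lemma grid_less_iff: "m \<le> grid_cells G \<Longrightarrow> m' \<le> grid_cells G \<Longrightarrow> grid G m < grid G m' \<longleftrightarrow> m < m'"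
  using grid_less by (metis linorder_neq_iff order_less_asym)

lemma grid_le_iff: "m \<le> grid_cells G \<Longrightarrow> m' \<le> grid_cells G \<Longrightarrow> grid G m \<le> grid G m' \<longleftrightarrow> m \<le> m'"
  using grid_less_iff by (meson not_le)

lemma grid_in: "m \<le> grid_cells G \<Longrightarrow> grid G m \<in> G"
  unfolding grid_def using length_sorted_list_of_set_grid finite_G
  by (metis less_Suc_eq_le nth_mem set_sorted_list_of_set)

lemma grid_surj: "u \<in> G \<Longrightarrow> \<exists>k\<le>grid_cells G. grid G k = u"
  unfolding grid_def using length_sorted_list_of_set_grid finite_G
  by (metis in_set_conv_nth less_Suc_eq_le set_sorted_list_of_set)

lemma cell_length_pos: "m < grid_cells G \<Longrightarrow> 0 < cell_length G m"
  using grid_less[of m "Suc m"] by (simp add: cell_length_def)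

lemma grid_telescope:
  fixes f :: "real \<Rightarrow> real"
  assumes "u \<in> G" "u' \<in> G" "u \<le> u'"
  shows "f u' - f u = (\<Sum>m<grid_cells G.
           of_bool (u \<le> grid G m \<and> grid G m < u') * (f (grid G (Suc m)) - f (grid G m)))"
proof -
  obtain k where k: "k \<le> grid_cells G" "grid G k = u" using grid_surj assms(1) by blast
  obtain k' where k': "k' \<le> grid_cells G" "grid G k' = u'" using grid_surj assms(2) by blast
  have "k \<le> k'" using assms(3) k k' grid_le_iff by auto
  have "(\<Sum>m<grid_cells G. of_bool (u \<le> grid G m \<and> grid G m < u') * (f (grid G (Suc m)) - f (grid G m)))
      = (\<Sum>m\<in>{..<grid_cells G} \<inter> {k..<k'}. f (grid G (Suc m)) - f (grid G m))"
    unfolding sum.inter_restrict[OF finite_lessThan]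
    using k k' by (intro sum.cong refl) (auto simp: grid_le_iff grid_less_iff)
  also have "{..<grid_cells G} \<inter> {k..<k'} = {k..<k'}" using k' by auto
  also have "(\<Sum>m\<in>{k..<k'}. f (grid G (Suc m)) - f (grid G m)) = f u' - f u"
    using sum_Suc_diff'[OF \<open>k \<le> k'\<close>, of "\<lambda>m. f (grid G m)"] k k' by simp
  finally show ?thesis by simp
qed

lemma grid_integral_interval:
  assumes "a \<in> G" "b \<in> G" "a \<le> b"
  shows "grid_integral G (\<lambda>x. of_bool (a \<le> x \<and> x < b)) = b - a"
  using grid_telescope[OF assms, of "\<lambda>x. x"] by (simp add: grid_integral_def cell_length_def mult.commute)

lemma grid_integral2_rectangle:
  assumes "a \<in> G" "b \<in> G" "a \<le> b" "c \<in> G" "e \<in> G" "c \<le> e"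
  shows "grid_integral2 G (\<lambda>x y. of_bool (a \<le> x \<and> x < b) * of_bool (c \<le> y \<and> y < e)) = (b - a) * (e - c)"
  using assms by (simp add: grid_integral2_product grid_integral_interval)

lemma grid_integral2_mono:
  assumes "\<And>x y. F x y \<le> F' x y"
  shows "grid_integral2 G F \<le> grid_integral2 G F'"
  unfolding grid_integral2_def
  using assms cell_length_pos by (intro sum_mono) (simp add: mult_right_mono less_imp_le)

end

lemma brownian_motion_prob_space: "brownian_motion M d W \<Longrightarrow> prob_space M"
  unfolding brownian_motion_def by blast

lemma brownian_motion_measurable:
  "brownian_motion M d W \<Longrightarrow> c \<in> {1..d} \<Longrightarrow> r \<in> {0..1} \<Longrightarrow> W c r \<in> borel_measurable M"
  unfolding brownian_motion_def by blast

definition grid_increment :: "(nat \<Rightarrow> real \<Rightarrow> 'a \<Rightarrow> real) \<Rightarrow> real set \<Rightarrow> nat \<Rightarrow> nat \<Rightarrow> 'a \<Rightarrow> real" where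
  "grid_increment W G c m \<omega> = W c (grid G (Suc m)) \<omega> - W c (grid G m) \<omega>"

lemma brownian_motion_grid_increments:
  assumes bm: "brownian_motion M d W"
    and G: "finite G" "G \<noteq> {}" "G \<subseteq> {0..1}"
  shows "prob_space.indep_vars M (\<lambda>_. borel) (\<lambda>(c, m). grid_increment W G c m) ({1..d} \<times> {..<grid_cells G})"
    and "c \<in> {1..d} \<Longrightarrow> m < grid_cells G \<Longrightarrow>
      distributed M lborel (grid_increment W G c m) (\<lambda>x. ennreal (normal_density 0 (sqrt (cell_length G m)) x))"
proof -
  have "\<forall>k<grid_cells G. grid G k < grid G (Suc k)" "0 \<le> grid G 0" "grid G (grid_cells G) \<le> 1"
    using grid_less[OF G(1,2)] grid_in[OF G(1,2), of 0] grid_in[OF G(1,2), of "grid_cells G"] G(3) by auto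
  then have "prob_space.indep_vars M (\<lambda>_. borel) (\<lambda>(c, m) \<omega>. W c (grid G (Suc m)) \<omega> - W c (grid G m) \<omega>)
        ({1..d} \<times> {..<grid_cells G}) \<and>
      (\<forall>c\<in>{1..d}. \<forall>m<grid_cells G. distributed M lborel (\<lambda>\<omega>. W c (grid G (Suc m)) \<omega> - W c (grid G m) \<omega>)
        (\<lambda>x. ennreal (normal_density 0 (sqrt (grid G (Suc m) - grid G m)) x)))"
    using bm unfolding brownian_motion_def by blast
  then show "prob_space.indep_vars M (\<lambda>_. borel) (\<lambda>(c, m). grid_increment W G c m) ({1..d} \<times> {..<grid_cells G})"
    and "c \<in> {1..d} \<Longrightarrow> m < grid_cells G \<Longrightarrow>
      distributed M lborel (grid_increment W G c m) (\<lambda>x. ennreal (normal_density 0 (sqrt (cell_length G m)) x))"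
    unfolding grid_increment_def cell_length_def by auto
qed

definition wiener_double_sum ::
  "(nat \<Rightarrow> real \<Rightarrow> 'a \<Rightarrow> real) \<Rightarrow> real set \<Rightarrow> nat \<Rightarrow> nat \<Rightarrow> (real \<Rightarrow> real \<Rightarrow> real) \<Rightarrow> 'a \<Rightarrow> real" where
  "wiener_double_sum W G i j F \<omega> = (\<Sum>m<grid_cells G. \<Sum>l<grid_cells G.
     F (grid G m) (grid G l) * grid_increment W G i m \<omega> * grid_increment W G j l \<omega>)"

lemma wiener_double_sum_diff:
  "wiener_double_sum W G i j (\<lambda>x y. a * F x y - b * F' x y) \<omega>
     = a * wiener_double_sum W G i j F \<omega> - b * wiener_double_sum W G i j F' \<omega>"
  unfolding wiener_double_sum_def
  by (simp add: sum_subtractf sum_distrib_left left_diff_distrib mult.assoc)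

lemma sum_Times_of_bool_fst:
  fixes g :: "'c \<times> 'b \<Rightarrow> real"
  assumes "finite C" "i \<in> C"
  shows "(\<Sum>x\<in>C \<times> B. of_bool (fst x = i) * g x) = (\<Sum>m\<in>B. g (i, m))"
proof -
  have "(\<Sum>x\<in>C \<times> B. of_bool (fst x = i) * g x) = (\<Sum>c\<in>C. of_bool (c = i) * (\<Sum>m\<in>B. g (c, m)))"
    by (simp only: sum.cartesian_product' sum_distrib_left fst_conv)
  also have "\<dots> = (\<Sum>m\<in>B. g (i, m))"
    using assms by simp
  finally show ?thesis .
qed

lemma brownian_wiener_double_sum_second_moment:
  assumes bm: "brownian_motion M d W"
    and G: "finite G" "G \<noteq> {}" "G \<subseteq> {0..1}"
    and ij: "i \<in> {1..d}" "j \<in> {1..d}"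
  shows "integrable M (\<lambda>\<omega>. (wiener_double_sum W G i j F \<omega>)\<^sup>2)"
    and "(\<integral>\<omega>. (wiener_double_sum W G i j F \<omega>)\<^sup>2 \<partial>M) \<le>
      (of_bool (i = j) * grid_integral G (\<lambda>x. F x x))\<^sup>2 + 2 * grid_integral2 G (\<lambda>x y. (F x y)\<^sup>2)"
proof -
  interpret prob_space M using brownian_motion_prob_space[OF bm] .
  define I where "I = {1..d} \<times> {..<grid_cells G}"
  define X where "X = (\<lambda>(c, m). grid_increment W G c m)"
  define v where "v x = cell_length G (snd x)" for x :: "nat \<times> nat"
  define A where "A x y = of_bool (fst x = i \<and> fst y = j) * F (grid G (snd x)) (grid G (snd y))"
    for x y :: "nat \<times> nat"
  have I: "finite I" by (simp add: I_def)
  have indep: "indep_vars (\<lambda>_. borel) X I"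
    unfolding X_def I_def by (rule brownian_motion_grid_increments(1)[OF bm G])
  have normal: "distributed M lborel (X x) (\<lambda>y. ennreal (normal_density 0 (sqrt (v x)) y))" if "x \<in> I" for x
    using brownian_motion_grid_increments(2)[OF bm G] that by (auto simp: I_def X_def v_def)
  have v: "0 < v x" if "x \<in> I" for x
    using cell_length_pos[OF G(1,2)] that by (auto simp: I_def v_def)
  have select2: "(\<Sum>x\<in>I. \<Sum>y\<in>I. of_bool (fst x = i) * (of_bool (fst y = j) * H (snd x) (snd y)))
      = (\<Sum>m<grid_cells G. \<Sum>l<grid_cells G. H m l)" for H :: "nat \<Rightarrow> nat \<Rightarrow> real"
    unfolding I_def sum_distrib_left[symmetric]
    by (simp only: sum_Times_of_bool_fst[OF finite_atLeastAtMost ij(1)]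
        sum_Times_of_bool_fst[OF finite_atLeastAtMost ij(2)] snd_conv)
  have "A x y * X x \<omega> * X y \<omega> = of_bool (fst x = i) * (of_bool (fst y = j) *
      (F (grid G (snd x)) (grid G (snd y)) * grid_increment W G i (snd x) \<omega> * grid_increment W G j (snd y) \<omega>))"
    for x y \<omega> by (auto simp: A_def X_def split: prod.splits)
  then have form: "(\<Sum>x\<in>I. \<Sum>y\<in>I. A x y * X x \<omega> * X y \<omega>) = wiener_double_sum W G i j F \<omega>" for \<omega>
    using select2[of "\<lambda>m l. F (grid G m) (grid G l) * grid_increment W G i m \<omega> * grid_increment W G j l \<omega>"]
    by (simp only: wiener_double_sum_def)
  have "A x x * v x = of_bool (fst x = i) * (of_bool (i = j) * (F (grid G (snd x)) (grid G (snd x)) * cell_length G (snd x)))"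
    for x by (auto simp: A_def v_def)
  then have trace: "(\<Sum>x\<in>I. A x x * v x) = of_bool (i = j) * grid_integral G (\<lambda>x. F x x)"
    unfolding I_def grid_integral_def sum_distrib_left
    by (simp only: sum_Times_of_bool_fst[OF finite_atLeastAtMost ij(1)] snd_conv)
  have "(A x y)\<^sup>2 * v x * v y = of_bool (fst x = i) * (of_bool (fst y = j) *
      ((F (grid G (snd x)) (grid G (snd y)))\<^sup>2 * cell_length G (snd x) * cell_length G (snd y)))"
    for x y by (simp add: A_def v_def of_bool_def)
  then have square: "(\<Sum>x\<in>I. \<Sum>y\<in>I. (A x y)\<^sup>2 * v x * v y) = grid_integral2 G (\<lambda>x y. (F x y)\<^sup>2)"
    using select2[of "\<lambda>m l. (F (grid G m) (grid G l))\<^sup>2 * cell_length G m * cell_length G l"]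
    by (simp only: grid_integral2_def)
  show "integrable M (\<lambda>\<omega>. (wiener_double_sum W G i j F \<omega>)\<^sup>2)"
    using integrable_normal_quadratic_form_sq[OF I indep normal v, of A] by (simp only: form)
  show "(\<integral>\<omega>. (wiener_double_sum W G i j F \<omega>)\<^sup>2 \<partial>M) \<le>
      (of_bool (i = j) * grid_integral G (\<lambda>x. F x x))\<^sup>2 + 2 * grid_integral2 G (\<lambda>x y. (F x y)\<^sup>2)"
    using integral_normal_quadratic_form_sq_le[OF I indep normal v, of A] by (simp only: form trace square)
qed

section \<open>Dyadic Riemann sums as double Wiener sums\<close>

definition dyadic_points :: "real \<Rightarrow> real \<Rightarrow> nat \<Rightarrow> real set" where
  "dyadic_points s t n = dyad s t n ` {..2^n}"

lemma dyad_0 [simp]: "dyad s t n 0 = s"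
  by (simp add: dyad_def)

lemma dyad_2_power [simp]: "dyad s t n (2^n) = t"
  by (simp add: dyad_def)

lemma dyad_Suc_diff: "dyad s t n (Suc k) - dyad s t n k = (t - s) / 2^n"
  by (simp add: dyad_def field_simps)

lemma dyad_mono: "s \<le> t \<Longrightarrow> k \<le> k' \<Longrightarrow> dyad s t n k \<le> dyad s t n k'"
  unfolding dyad_def by (intro add_left_mono divide_right_mono mult_right_mono) auto

lemma dyad_between: "s \<le> t \<Longrightarrow> k \<le> 2^n \<Longrightarrow> s \<le> dyad s t n k \<and> dyad s t n k \<le> t"
  using dyad_mono[of s t 0 k n] dyad_mono[of s t k "2^n" n] by simp

lemma finite_dyadic_points [simp]: "finite (dyadic_points s t n)"
  by (simp add: dyadic_points_def)

lemma dyad_in_dyadic_points: "k \<le> 2^n \<Longrightarrow> dyad s t n k \<in> dyadic_points s t n"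
  by (simp add: dyadic_points_def)

lemma endpoints_in_dyadic_points: "s \<in> dyadic_points s t n" "t \<in> dyadic_points s t n"
  using dyad_in_dyadic_points[of 0 n s t] dyad_in_dyadic_points[of "2^n" n s t] by simp_all

lemma dyadic_points_subset: "0 \<le> s \<Longrightarrow> s \<le> t \<Longrightarrow> t \<le> 1 \<Longrightarrow> dyadic_points s t n \<subseteq> {0..1}"
  using dyad_between[of s t] by (force simp: dyadic_points_def)

(* The weight 1/2 on the diagonal dyadic block is the trapezoidal (Stratonovich) correction. *)
definition lvl2_kernel :: "bool \<Rightarrow> real \<Rightarrow> real \<Rightarrow> nat \<Rightarrow> real \<Rightarrow> real \<Rightarrow> real" where
  "lvl2_kernel strat s t n x y = (\<Sum>k<2^n.
     (of_bool (s \<le> x \<and> x < dyad s t n k)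
      + (if strat then 1/2 else 0) * of_bool (dyad s t n k \<le> x \<and> x < dyad s t n (Suc k)))
     * of_bool (dyad s t n k \<le> y \<and> y < dyad s t n (Suc k)))"

lemma lvl2_sum_eq_wiener_double_sum:
  assumes G: "finite G" "dyadic_points s t n \<subseteq> G" and st: "s \<le> t"
  shows "lvl2_sum strat W i j s t n \<omega> = wiener_double_sum W G i j (lvl2_kernel strat s t n) \<omega>"
proof -
  have G_ne: "G \<noteq> {}" using G(2) endpoints_in_dyadic_points by blast
  define c :: real where "c = (if strat then 1/2 else 0)"
  define u where "u = dyad s t n"
  define ind where "ind a b x = (of_bool (a \<le> x \<and> x < b) :: real)" for a b x :: real
  have u_G: "u k \<in> G" if "k \<le> 2^n" for k
    using G(2) dyad_in_dyadic_points that unfolding u_def by blast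
  have increment: "W c' b \<omega> - W c' a \<omega> = (\<Sum>m<grid_cells G. ind a b (grid G m) * grid_increment W G c' m \<omega>)"
    if "a \<in> G" "b \<in> G" "a \<le> b" for a b c'
    using grid_telescope[OF G(1) G_ne that, of "\<lambda>r. W c' r \<omega>"] by (simp add: ind_def grid_increment_def)
  have summand: "((if strat then (W i (u k) \<omega> + W i (u (Suc k)) \<omega>) / 2 else W i (u k) \<omega>) - W i s \<omega>)
        * (W j (u (Suc k)) \<omega> - W j (u k) \<omega>)
     = (\<Sum>m<grid_cells G. \<Sum>l<grid_cells G. ((ind s (u k) (grid G m) + c * ind (u k) (u (Suc k)) (grid G m))
          * ind (u k) (u (Suc k)) (grid G l)) * grid_increment W G i m \<omega> * grid_increment W G j l \<omega>)"
    if k: "k < 2^n" for k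
  proof -
    have s_G: "s \<in> G" using u_G[of 0] by (simp add: u_def)
    have uk: "u k \<in> G" "u (Suc k) \<in> G" using u_G k by auto
    have le: "s \<le> u k" "u k \<le> u (Suc k)"
      using dyad_between[OF st, of k n] dyad_mono[OF st, of k "Suc k" n] k by (simp_all add: u_def)
    have "(if strat then (W i (u k) \<omega> + W i (u (Suc k)) \<omega>) / 2 else W i (u k) \<omega>) - W i s \<omega>
        = (W i (u k) \<omega> - W i s \<omega>) + c * (W i (u (Suc k)) \<omega> - W i (u k) \<omega>)"
      by (simp add: c_def field_simps)
    also have "\<dots> = (\<Sum>m<grid_cells G. (ind s (u k) (grid G m) + c * ind (u k) (u (Suc k)) (grid G m))
            * grid_increment W G i m \<omega>)"
      unfolding increment[OF s_G uk(1) le(1)] increment[OF uk le(2)]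
      by (simp add: sum_distrib_left sum.distrib[symmetric] distrib_left distrib_right mult_ac)
    finally have first: "(if strat then (W i (u k) \<omega> + W i (u (Suc k)) \<omega>) / 2 else W i (u k) \<omega>) - W i s \<omega>
        = (\<Sum>m<grid_cells G. (ind s (u k) (grid G m) + c * ind (u k) (u (Suc k)) (grid G m))
            * grid_increment W G i m \<omega>)" .
    show ?thesis
      unfolding first increment[OF uk le(2), of j] sum_product by (intro sum.cong refl) (simp add: mult_ac)
  qed
  have "lvl2_sum strat W i j s t n \<omega> = (\<Sum>k<2^n. \<Sum>m<grid_cells G. \<Sum>l<grid_cells G.
      ((ind s (u k) (grid G m) + c * ind (u k) (u (Suc k)) (grid G m)) * ind (u k) (u (Suc k)) (grid G l))
        * grid_increment W G i m \<omega> * grid_increment W G j l \<omega>)"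
    unfolding lvl2_sum_def u_def[symmetric] using summand by (intro sum.cong) auto
  also have "\<dots> = (\<Sum>m<grid_cells G. \<Sum>l<grid_cells G. \<Sum>k<2^n.
      ((ind s (u k) (grid G m) + c * ind (u k) (u (Suc k)) (grid G m)) * ind (u k) (u (Suc k)) (grid G l))
        * grid_increment W G i m \<omega> * grid_increment W G j l \<omega>)"
    by (subst sum.swap, subst (2) sum.swap) (rule refl)
  also have "\<dots> = wiener_double_sum W G i j (lvl2_kernel strat s t n) \<omega>"
    by (simp only: wiener_double_sum_def lvl2_kernel_def u_def c_def ind_def sum_distrib_right)
  finally show ?thesis .
qed

definition same_dyadic_block :: "real \<Rightarrow> real \<Rightarrow> nat \<Rightarrow> real \<Rightarrow> real \<Rightarrow> real" where
  "same_dyadic_block s t n x y = (\<Sum>k<2^n.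
     of_bool (dyad s t n k \<le> x \<and> x < dyad s t n (Suc k)) * of_bool (dyad s t n k \<le> y \<and> y < dyad s t n (Suc k)))"

(* The kernel of the iterated integral over s \<le> x < y < t, the limit of the dyadic kernels. *)
definition simplex_kernel :: "real \<Rightarrow> real \<Rightarrow> real \<Rightarrow> real \<Rightarrow> real" where
  "simplex_kernel s t x y = of_bool (s \<le> x \<and> x < y \<and> y < t)"

context
  fixes s t :: real and n :: nat
  assumes st: "s < t"
begin

lemma dyadic_block_exists:
  assumes "s \<le> y" "y < t"
  obtains k where "k < 2^n" "dyad s t n k \<le> y" "y < dyad s t n (Suc k)"
proof -
  define \<delta> where "\<delta> = (t - s) / 2^n"
  have \<delta>: "0 < \<delta>" using st by (simp add: \<delta>_def)
  define k where "k = nat \<lfloor>(y - s) / \<delta>\<rfloor>"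
  have "0 \<le> (y - s) / \<delta>" using assms \<delta> by simp
  then have k: "real k \<le> (y - s) / \<delta>" "(y - s) / \<delta> < real k + 1"
    unfolding k_def by linarith+
  have "(y - s) / \<delta> < 2^n" using assms st by (simp add: \<delta>_def field_simps)
  then have "k < 2^n" using k(1) by (metis of_nat_less_numeral_power_cancel_iff order_le_less_trans)
  moreover have "real k * \<delta> \<le> y - s" "y - s < (real k + 1) * \<delta>"
    using k \<delta> by (simp_all add: le_divide_eq divide_less_eq)
  then have "dyad s t n k \<le> y" "y < dyad s t n (Suc k)"
    by (simp_all add: dyad_def \<delta>_def algebra_simps)
  ultimately show ?thesis using that by blast
qed

lemma dyadic_block_unique:
  assumes "dyad s t n k \<le> y" "y < dyad s t n (Suc k)" "dyad s t n k' \<le> y" "y < dyad s t n (Suc k')"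
  shows "k = k'"
proof (rule ccontr)
  assume "k \<noteq> k'"
  then have "Suc k \<le> k' \<or> Suc k' \<le> k" by linarith
  then show False
    using assms dyad_mono[OF less_imp_le[OF st], of "Suc k" k' n] dyad_mono[OF less_imp_le[OF st], of "Suc k'" k n]
    by auto
qed

lemma sum_dyadic_block:
  assumes "k < 2^n" "dyad s t n k \<le> y" "y < dyad s t n (Suc k)"
  shows "(\<Sum>k'<2^n. f k' * of_bool (dyad s t n k' \<le> y \<and> y < dyad s t n (Suc k'))) = (f k :: real)"
proof -
  have "(\<Sum>k'<2^n. f k' * of_bool (dyad s t n k' \<le> y \<and> y < dyad s t n (Suc k')))
      = (\<Sum>k'<2^n. if k' = k then f k else 0)"
    using assms dyadic_block_unique by (intro sum.cong) auto
  then show ?thesis using assms(1) by simp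
qed

lemma sum_dyadic_block_outside:
  assumes "\<not> (s \<le> y \<and> y < t)"
  shows "(\<Sum>k<2^n. f k * of_bool (dyad s t n k \<le> y \<and> y < dyad s t n (Suc k))) = (0 :: real)"
proof -
  have "\<not> (dyad s t n k \<le> y \<and> y < dyad s t n (Suc k))" if "k < 2^n" for k
    using assms dyad_between[OF less_imp_le[OF st], of k n] dyad_between[OF less_imp_le[OF st], of "Suc k" n] that
    by auto
  then show ?thesis by (intro sum.neutral) simp
qed

lemma lvl2_kernel_diag:
  "lvl2_kernel strat s t n x x = (if strat then 1/2 else 0) * of_bool (s \<le> x \<and> x < t)"
proof (cases "s \<le> x \<and> x < t")
  case True
  then obtain k where "k < 2^n" "dyad s t n k \<le> x" "x < dyad s t n (Suc k)"
    using dyadic_block_exists by blast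
  then show ?thesis using True unfolding lvl2_kernel_def by (subst sum_dyadic_block) auto
next
  case False
  then show ?thesis unfolding lvl2_kernel_def sum_dyadic_block_outside[OF False] by simp
qed

lemma dyadic_block_between:
  assumes "k < 2^n"
  shows "s \<le> dyad s t n k" "dyad s t n (Suc k) \<le> t"
  using dyad_between[OF less_imp_le[OF st], of k n] dyad_between[OF less_imp_le[OF st], of "Suc k" n] assms
  by auto

lemma lvl2_kernel_sq_le:
  "(lvl2_kernel strat s t n x y)\<^sup>2 \<le> of_bool (s \<le> x \<and> x < t) * of_bool (s \<le> y \<and> y < t)"
proof (cases "s \<le> y \<and> y < t")
  case True
  then obtain k where k: "k < 2^n" "dyad s t n k \<le> y" "y < dyad s t n (Suc k)"
    using dyadic_block_exists by blast
  show ?thesis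
    unfolding lvl2_kernel_def sum_dyadic_block[OF k] using True k dyadic_block_between[OF k(1)]
    by (auto simp: of_bool_def power2_eq_square)
next
  case False
  then show ?thesis unfolding lvl2_kernel_def sum_dyadic_block_outside[OF False] by simp
qed

lemma lvl2_kernel_approx:
  "\<bar>lvl2_kernel strat s t n x y - simplex_kernel s t x y\<bar> \<le> same_dyadic_block s t n x y"
proof (cases "s \<le> y \<and> y < t")
  case True
  then obtain k where k: "k < 2^n" "dyad s t n k \<le> y" "y < dyad s t n (Suc k)"
    using dyadic_block_exists by blast
  show ?thesis
    unfolding lvl2_kernel_def same_dyadic_block_def sum_dyadic_block[OF k]
    using True k dyadic_block_between[OF k(1)] by (auto simp: simplex_kernel_def of_bool_def)
next
  case False
  then show ?thesis
    unfolding lvl2_kernel_def same_dyadic_block_def sum_dyadic_block_outside[OF False]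
    by (auto simp: simplex_kernel_def)
qed

lemma same_dyadic_block_sq_le: "(same_dyadic_block s t n x y)\<^sup>2 \<le> same_dyadic_block s t n x y"
proof (cases "s \<le> y \<and> y < t")
  case True
  then obtain k where k: "k < 2^n" "dyad s t n k \<le> y" "y < dyad s t n (Suc k)"
    using dyadic_block_exists by blast
  show ?thesis unfolding same_dyadic_block_def sum_dyadic_block[OF k] by simp
next
  case False
  then show ?thesis unfolding same_dyadic_block_def sum_dyadic_block_outside[OF False] by simp
qed

end

context
  fixes G :: "real set" and s t :: real and n :: nat
  assumes G: "finite G" "dyadic_points s t n \<subseteq> G" and st: "s < t"
begin

lemma endpoints_in_grid: "s \<in> G" "t \<in> G"
  using G(2) endpoints_in_dyadic_points by blast+

lemma grid_nonempty: "G \<noteq> {}"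
  using endpoints_in_grid by blast

lemma grid_integral_lvl2_kernel_diag:
  "grid_integral G (\<lambda>x. lvl2_kernel strat s t n x x) = (if strat then 1/2 else 0) * (t - s)"
  using grid_integral_interval[OF G(1) grid_nonempty endpoints_in_grid] st
  by (simp add: lvl2_kernel_diag[OF st] grid_integral_cmult)

lemma grid_integral2_lvl2_kernel_sq_le:
  "grid_integral2 G (\<lambda>x y. (lvl2_kernel strat s t n x y)\<^sup>2) \<le> (t - s)\<^sup>2"
proof -
  have "grid_integral2 G (\<lambda>x y. (lvl2_kernel strat s t n x y)\<^sup>2)
      \<le> grid_integral2 G (\<lambda>x y. of_bool (s \<le> x \<and> x < t) * of_bool (s \<le> y \<and> y < t))"
    by (rule grid_integral2_mono[OF G(1) grid_nonempty lvl2_kernel_sq_le[OF st]])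
  also have "\<dots> = (t - s)\<^sup>2"
    using grid_integral2_rectangle[OF G(1) grid_nonempty endpoints_in_grid _ endpoints_in_grid] st
    by (simp add: power2_eq_square)
  finally show ?thesis .
qed

lemma grid_integral2_same_dyadic_block:
  "grid_integral2 G (same_dyadic_block s t n) = (t - s)\<^sup>2 / 2^n"
proof -
  have block: "dyad s t n k \<in> G" "dyad s t n (Suc k) \<in> G" "dyad s t n k \<le> dyad s t n (Suc k)"
    if "k < 2^n" for k
    using G(2) dyad_in_dyadic_points[of k n s t] dyad_in_dyadic_points[of "Suc k" n s t] that
      dyad_mono[of s t k "Suc k" n] st by auto
  have "grid_integral2 G (same_dyadic_block s t n) = (\<Sum>k<2^n. grid_integral2 G (\<lambda>x y.
      of_bool (dyad s t n k \<le> x \<and> x < dyad s t n (Suc k)) * of_bool (dyad s t n k \<le> y \<and> y < dyad s t n (Suc k))))"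
    unfolding grid_integral2_def same_dyadic_block_def sum_distrib_right
    by (subst sum.swap, subst (2) sum.swap) (rule refl)
  also have "\<dots> = (\<Sum>k<(2::nat)^n. ((t - s) / 2^n)\<^sup>2)"
    using grid_integral2_rectangle[OF G(1) grid_nonempty block block] dyad_Suc_diff
    by (simp add: power2_eq_square)
  also have "\<dots> = (t - s)\<^sup>2 / 2^n"
    by (simp add: power2_eq_square field_simps)
  finally show ?thesis .
qed

end

(* Two rectangles covering the symmetric difference of the two simplices. *)
definition simplex_diff_cover :: "real \<Rightarrow> real \<Rightarrow> real \<Rightarrow> real \<Rightarrow> real \<Rightarrow> real \<Rightarrow> real" where
  "simplex_diff_cover s t s' t' x y =
     of_bool (min s s' \<le> x \<and> x < max s s') * of_bool (min s s' \<le> y \<and> y < max t t')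
   + of_bool (min s s' \<le> x \<and> x < max t t') * of_bool (min t t' \<le> y \<and> y < max t t')"

lemma simplex_kernel_diff_sq_le:
  "(simplex_kernel s t x y - simplex_kernel s' t' x y)\<^sup>2 \<le> simplex_diff_cover s t s' t' x y"
  unfolding simplex_kernel_def simplex_diff_cover_def of_bool_def by (auto simp: min_def max_def)

lemma grid_integral2_simplex_diff_cover:
  assumes G: "finite G" "s \<in> G" "t \<in> G" "s' \<in> G" "t' \<in> G" and st: "s < t" "s' < t'"
  shows "grid_integral2 G (simplex_diff_cover s t s' t') = (\<bar>s - s'\<bar> + \<bar>t - t'\<bar>) * (max t t' - min s s')"
proof -
  have G_ne: "G \<noteq> {}" using G by blast
  have min_max: "min s s' \<in> G" "max s s' \<in> G" "min t t' \<in> G" "max t t' \<in> G"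
    using G by (auto simp: min_def max_def)
  have "grid_integral2 G (simplex_diff_cover s t s' t')
      = (max s s' - min s s') * (max t t' - min s s') + (max t t' - min s s') * (max t t' - min t t')"
    unfolding simplex_diff_cover_def grid_integral2_add
    using grid_integral2_rectangle[OF G(1) G_ne min_max(1,2) _ min_max(1,4)]
      grid_integral2_rectangle[OF G(1) G_ne min_max(1,4) _ min_max(3,4)] st
    by (simp add: min_def max_def)
  also have "\<dots> = (\<bar>s - s'\<bar> + \<bar>t - t'\<bar>) * (max t t' - min s s')"
    unfolding abs_eq_max_minus_min by (simp add: algebra_simps)
  finally show ?thesis .
qed

lemma simplex_kernel_sq_le: "(simplex_kernel s t x y)\<^sup>2 \<le> of_bool (s \<le> x \<and> x < t) * of_bool (s \<le> y \<and> y < t)"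
  unfolding simplex_kernel_def of_bool_def by auto

lemma lvl2_sum_measurable:
  assumes bm: "brownian_motion M d W" and i: "i \<in> {1..d}" and j: "j \<in> {1..d}"
    and st: "0 \<le> s" "s \<le> t" "t \<le> 1"
  shows "lvl2_sum strat W i j s t n \<in> borel_measurable M"
proof -
  have "dyad s t n k \<in> {0..1}" if "k \<le> 2^n" for k
    using dyad_between[OF st(2) that] st by auto
  then have [measurable]: "W c (dyad s t n k) \<in> borel_measurable M" if "c \<in> {i, j}" "k \<le> 2^n" for c k
    using brownian_motion_measurable[OF bm] i j that by blast
  have [measurable]: "W i s \<in> borel_measurable M"
    using brownian_motion_measurable[OF bm i] st by simp
  show ?thesis
    unfolding lvl2_sum_def by measurable
qed

lemma lvl2_sum_lincomb_second_moment:
  fixes n n' :: nat and a b :: real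
  assumes bm: "brownian_motion M d W" and ij: "i \<in> {1..d}" "j \<in> {1..d}"
    and st: "0 \<le> s" "s < t" "t \<le> 1" and st': "0 \<le> s'" "s' < t'" "t' \<le> 1"
  defines "G \<equiv> dyadic_points s t n \<union> dyadic_points s' t' n'"
  shows "integrable M (\<lambda>\<omega>. (a * lvl2_sum strat W i j s t n \<omega> - b * lvl2_sum strat W i j s' t' n' \<omega>)\<^sup>2)"
    and "(\<integral>\<omega>. (a * lvl2_sum strat W i j s t n \<omega> - b * lvl2_sum strat W i j s' t' n' \<omega>)\<^sup>2 \<partial>M)
      \<le> (a * (t - s) - b * (t' - s'))\<^sup>2
        + 2 * grid_integral2 G (\<lambda>x y. (a * lvl2_kernel strat s t n x y - b * lvl2_kernel strat s' t' n' x y)\<^sup>2)"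
proof -
  have G: "finite G" "dyadic_points s t n \<subseteq> G" "dyadic_points s' t' n' \<subseteq> G"
    by (auto simp: G_def)
  have G01: "G \<subseteq> {0..1}"
    using dyadic_points_subset st st' by (auto simp: G_def)
  define F where "F x y = a * lvl2_kernel strat s t n x y - b * lvl2_kernel strat s' t' n' x y" for x y
  have sum_eq: "a * lvl2_sum strat W i j s t n \<omega> - b * lvl2_sum strat W i j s' t' n' \<omega>
      = wiener_double_sum W G i j F \<omega>" for \<omega>
    unfolding F_def wiener_double_sum_diff
    by (simp only: lvl2_sum_eq_wiener_double_sum[OF G(1,2) less_imp_le[OF st(2)]]
        lvl2_sum_eq_wiener_double_sum[OF G(1,3) less_imp_le[OF st'(2)]])
  show "integrable M (\<lambda>\<omega>. (a * lvl2_sum strat W i j s t n \<omega> - b * lvl2_sum strat W i j s' t' n' \<omega>)\<^sup>2)"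
    unfolding sum_eq
    by (rule brownian_wiener_double_sum_second_moment(1)[OF bm G(1) grid_nonempty[OF G(1,2) st(2)] G01 ij])
  have "grid_integral G (\<lambda>x. F x x) = (if strat then 1/2 else 0) * (a * (t - s) - b * (t' - s'))"
    unfolding F_def grid_integral_diff grid_integral_lvl2_kernel_diag[OF G(1,2) st(2)]
      grid_integral_lvl2_kernel_diag[OF G(1,3) st'(2)]
    by (simp add: algebra_simps)
  then have "(of_bool (i = j) * grid_integral G (\<lambda>x. F x x))\<^sup>2
      = (of_bool (i = j) * (if strat then 1/2 else 0))\<^sup>2 * (a * (t - s) - b * (t' - s'))\<^sup>2"
    by (simp add: power_mult_distrib)
  also have "\<dots> \<le> 1 * (a * (t - s) - b * (t' - s'))\<^sup>2"
    by (intro mult_right_mono) (auto simp: power2_eq_square)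
  finally have "(of_bool (i = j) * grid_integral G (\<lambda>x. F x x))\<^sup>2 \<le> (a * (t - s) - b * (t' - s'))\<^sup>2"
    by simp
  then show "(\<integral>\<omega>. (a * lvl2_sum strat W i j s t n \<omega> - b * lvl2_sum strat W i j s' t' n' \<omega>)\<^sup>2 \<partial>M)
      \<le> (a * (t - s) - b * (t' - s'))\<^sup>2
        + 2 * grid_integral2 G (\<lambda>x y. (a * lvl2_kernel strat s t n x y - b * lvl2_kernel strat s' t' n' x y)\<^sup>2)"
    using brownian_wiener_double_sum_second_moment(2)[OF bm G(1) grid_nonempty[OF G(1,2) st(2)] G01 ij, of F]
    unfolding sum_eq F_def by linarith
qed

lemma grid_integral2_kernel_lincomb_le:
  fixes n n' :: nat and a b :: real
  assumes st: "s < t" and st': "s' < t'"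
  defines "G \<equiv> dyadic_points s t n \<union> dyadic_points s' t' n'"
  shows "grid_integral2 G (\<lambda>x y. (a * lvl2_kernel strat s t n x y - b * lvl2_kernel strat s' t' n' x y)\<^sup>2)
    \<le> 2 * (a\<^sup>2 * (t - s)\<^sup>2 + b\<^sup>2 * (t' - s')\<^sup>2)"
proof -
  have G: "finite G" "dyadic_points s t n \<subseteq> G" "dyadic_points s' t' n' \<subseteq> G"
    by (auto simp: G_def)
  have "grid_integral2 G (\<lambda>x y. (a * lvl2_kernel strat s t n x y - b * lvl2_kernel strat s' t' n' x y)\<^sup>2)
      \<le> grid_integral2 G (\<lambda>x y. 2 * a\<^sup>2 * (lvl2_kernel strat s t n x y)\<^sup>2
                                + 2 * b\<^sup>2 * (lvl2_kernel strat s' t' n' x y)\<^sup>2)"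
  proof (rule grid_integral2_mono[OF G(1) grid_nonempty[OF G(1,2) st]])
    fix x y
    show "(a * lvl2_kernel strat s t n x y - b * lvl2_kernel strat s' t' n' x y)\<^sup>2
        \<le> 2 * a\<^sup>2 * (lvl2_kernel strat s t n x y)\<^sup>2 + 2 * b\<^sup>2 * (lvl2_kernel strat s' t' n' x y)\<^sup>2"
      using square_add_le[of "a * lvl2_kernel strat s t n x y" "- b * lvl2_kernel strat s' t' n' x y"]
      by (simp add: power_mult_distrib mult.assoc)
  qed
  also have "\<dots> = 2 * a\<^sup>2 * grid_integral2 G (\<lambda>x y. (lvl2_kernel strat s t n x y)\<^sup>2)
      + 2 * b\<^sup>2 * grid_integral2 G (\<lambda>x y. (lvl2_kernel strat s' t' n' x y)\<^sup>2)"
    by (simp only: grid_integral2_add grid_integral2_cmult)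
  also have "\<dots> \<le> 2 * a\<^sup>2 * (t - s)\<^sup>2 + 2 * b\<^sup>2 * (t' - s')\<^sup>2"
    by (intro add_mono mult_left_mono grid_integral2_lvl2_kernel_sq_le G st st') auto
  finally show ?thesis by (simp add: algebra_simps)
qed

lemma lvl2_kernel_lincomb_sq_le:
  assumes st: "s < t" and st': "s' < t'"
  shows "(a * lvl2_kernel strat s t n x y - b * lvl2_kernel strat s' t' n' x y)\<^sup>2
    \<le> 4 * (a\<^sup>2 * same_dyadic_block s t n x y + b\<^sup>2 * same_dyadic_block s' t' n' x y
            + a\<^sup>2 * simplex_diff_cover s t s' t' x y
            + (a - b)\<^sup>2 * (of_bool (s' \<le> x \<and> x < t') * of_bool (s' \<le> y \<and> y < t')))"
proof -
  have approx: "(lvl2_kernel strat s t n x y - simplex_kernel s t x y)\<^sup>2 \<le> same_dyadic_block s t n x y"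
    if "s < t" for s t :: real and n
    using power_mono[OF lvl2_kernel_approx[OF that, of strat n x y] abs_ge_zero, of 2]
      same_dyadic_block_sq_le[OF that, of n x y]
    by simp
  have split: "a * lvl2_kernel strat s t n x y - b * lvl2_kernel strat s' t' n' x y
      = a * (lvl2_kernel strat s t n x y - simplex_kernel s t x y)
        + (- b) * (lvl2_kernel strat s' t' n' x y - simplex_kernel s' t' x y)
        + a * (simplex_kernel s t x y - simplex_kernel s' t' x y) + (a - b) * simplex_kernel s' t' x y"
    by (simp add: algebra_simps)
  have "(a * lvl2_kernel strat s t n x y - b * lvl2_kernel strat s' t' n' x y)\<^sup>2
      \<le> 4 * (a\<^sup>2 * (lvl2_kernel strat s t n x y - simplex_kernel s t x y)\<^sup>2
          + b\<^sup>2 * (lvl2_kernel strat s' t' n' x y - simplex_kernel s' t' x y)\<^sup>2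
          + a\<^sup>2 * (simplex_kernel s t x y - simplex_kernel s' t' x y)\<^sup>2
          + (a - b)\<^sup>2 * (simplex_kernel s' t' x y)\<^sup>2)"
    unfolding split by (rule order_trans[OF square_add4_le]) (simp add: power_mult_distrib)
  also have "\<dots> \<le> 4 * (a\<^sup>2 * same_dyadic_block s t n x y + b\<^sup>2 * same_dyadic_block s' t' n' x y
            + a\<^sup>2 * simplex_diff_cover s t s' t' x y
            + (a - b)\<^sup>2 * (of_bool (s' \<le> x \<and> x < t') * of_bool (s' \<le> y \<and> y < t')))"
    by (intro mult_left_mono add_mono approx st st' simplex_kernel_diff_sq_le simplex_kernel_sq_le
        zero_le_power2) simp
  finally show ?thesis .
qed

lemma grid_integral2_kernel_lincomb_le_near:
  fixes n n' :: nat and a b :: real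
  assumes st: "s < t" and st': "s' < t'"
  defines "G \<equiv> dyadic_points s t n \<union> dyadic_points s' t' n'"
  shows "grid_integral2 G (\<lambda>x y. (a * lvl2_kernel strat s t n x y - b * lvl2_kernel strat s' t' n' x y)\<^sup>2)
    \<le> 4 * (a\<^sup>2 * ((t - s)\<^sup>2 / 2^n) + b\<^sup>2 * ((t' - s')\<^sup>2 / 2^n')
            + a\<^sup>2 * ((\<bar>s - s'\<bar> + \<bar>t - t'\<bar>) * (max t t' - min s s')) + (a - b)\<^sup>2 * (t' - s')\<^sup>2)"
proof -
  have G: "finite G" "dyadic_points s t n \<subseteq> G" "dyadic_points s' t' n' \<subseteq> G"
    by (auto simp: G_def)
  note G_ne = grid_nonempty[OF G(1,2) st]
  have ends: "s \<in> G" "t \<in> G" "s' \<in> G" "t' \<in> G"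
    using endpoints_in_grid[OF G(1,2) st] endpoints_in_grid[OF G(1,3) st'] by auto
  have "grid_integral2 G (\<lambda>x y. (a * lvl2_kernel strat s t n x y - b * lvl2_kernel strat s' t' n' x y)\<^sup>2)
      \<le> grid_integral2 G (\<lambda>x y. 4 * (a\<^sup>2 * same_dyadic_block s t n x y + b\<^sup>2 * same_dyadic_block s' t' n' x y
            + a\<^sup>2 * simplex_diff_cover s t s' t' x y
            + (a - b)\<^sup>2 * (of_bool (s' \<le> x \<and> x < t') * of_bool (s' \<le> y \<and> y < t'))))"
    by (rule grid_integral2_mono[OF G(1) G_ne lvl2_kernel_lincomb_sq_le[OF st st']])
  also have "\<dots> = 4 * (a\<^sup>2 * grid_integral2 G (same_dyadic_block s t n)
            + b\<^sup>2 * grid_integral2 G (same_dyadic_block s' t' n')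
            + a\<^sup>2 * grid_integral2 G (simplex_diff_cover s t s' t')
            + (a - b)\<^sup>2 * grid_integral2 G (\<lambda>x y. of_bool (s' \<le> x \<and> x < t') * of_bool (s' \<le> y \<and> y < t')))"
    by (simp only: grid_integral2_add grid_integral2_cmult)
  also have "grid_integral2 G (\<lambda>x y. of_bool (s' \<le> x \<and> x < t') * of_bool (s' \<le> y \<and> y < t')) = (t' - s')\<^sup>2"
    using grid_integral2_rectangle[OF G(1) G_ne ends(3,4) _ ends(3,4)] st' by (simp add: power2_eq_square)
  finally show ?thesis
    unfolding grid_integral2_simplex_diff_cover[OF G(1) ends st st']
      grid_integral2_same_dyadic_block[OF G(1,2) st] grid_integral2_same_dyadic_block[OF G(1,3) st'] .
qed

lemma lvl2_sum_succ_diff_second_moment: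
  assumes bm: "brownian_motion M d W" and ij: "i \<in> {1..d}" "j \<in> {1..d}"
    and st: "0 \<le> s" "s < t" "t \<le> 1"
  shows "integrable M (\<lambda>\<omega>. (lvl2_sum strat W i j s t (Suc n) \<omega> - lvl2_sum strat W i j s t n \<omega>)\<^sup>2)"
    and "(\<integral>\<omega>. (lvl2_sum strat W i j s t (Suc n) \<omega> - lvl2_sum strat W i j s t n \<omega>)\<^sup>2 \<partial>M) \<le> 12 / 2^n"
proof -
  note second_moment = lvl2_sum_lincomb_second_moment[OF bm ij st st, where n = "Suc n" and n' = n and a = 1 and b = 1
      and strat = strat]
  show "integrable M (\<lambda>\<omega>. (lvl2_sum strat W i j s t (Suc n) \<omega> - lvl2_sum strat W i j s t n \<omega>)\<^sup>2)"
    using second_moment(1) by simp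
  have "(t - s)\<^sup>2 \<le> 1" using st by (simp add: power_le_one)
  then have "2 * (6 * (t - s)\<^sup>2 / 2^n) \<le> 12 / 2^n"
    by (simp add: divide_right_mono)
  moreover have "grid_integral2 (dyadic_points s t (Suc n) \<union> dyadic_points s t n)
      (\<lambda>x y. (lvl2_kernel strat s t (Suc n) x y - lvl2_kernel strat s t n x y)\<^sup>2) \<le> 6 * (t - s)\<^sup>2 / 2^n"
    using grid_integral2_kernel_lincomb_le_near[OF st(2) st(2), where n = "Suc n" and n' = n
        and a = 1 and b = 1 and strat = strat]
    by simp
  ultimately show "(\<integral>\<omega>. (lvl2_sum strat W i j s t (Suc n) \<omega> - lvl2_sum strat W i j s t n \<omega>)\<^sup>2 \<partial>M) \<le> 12 / 2^n"
    using second_moment(2) by simp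
qed

lemma lvl2_sum_AE_convergent:
  assumes bm: "brownian_motion M d W" and ij: "i \<in> {1..d}" "j \<in> {1..d}"
    and st: "0 \<le> s" "s < t" "t \<le> 1"
  shows "AE \<omega> in M. convergent (\<lambda>n. lvl2_sum strat W i j s t n \<omega>)"
  using prob_space.AE_convergent_if_increments_sq_le[OF brownian_motion_prob_space[OF bm]
      lvl2_sum_measurable[OF bm ij st(1) less_imp_le[OF st(2)] st(3)]
      lvl2_sum_succ_diff_second_moment(1)[OF bm ij st] lvl2_sum_succ_diff_second_moment(2)[OF bm ij st]] .

lemma lvl2_sum_scaled_second_moment:
  assumes bm: "brownian_motion M d W" and ij: "i \<in> {1..d}" "j \<in> {1..d}"
    and st: "0 \<le> s" "s < t" "t \<le> 1"
  shows "integrable M (\<lambda>\<omega>. (a * lvl2_sum strat W i j s t n \<omega>)\<^sup>2)"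
    and "(\<integral>\<omega>. (a * lvl2_sum strat W i j s t n \<omega>)\<^sup>2 \<partial>M) \<le> 5 * (a\<^sup>2 * (t - s)\<^sup>2)"
proof -
  note second_moment = lvl2_sum_lincomb_second_moment[OF bm ij st st, where n' = n and b = 0 and a = a and n = n
      and strat = strat]
  show "integrable M (\<lambda>\<omega>. (a * lvl2_sum strat W i j s t n \<omega>)\<^sup>2)"
    using second_moment(1) by simp
  show "(\<integral>\<omega>. (a * lvl2_sum strat W i j s t n \<omega>)\<^sup>2 \<partial>M) \<le> 5 * (a\<^sup>2 * (t - s)\<^sup>2)"
    using second_moment(2) grid_integral2_kernel_lincomb_le[OF st(2) st(2), where n' = n and b = 0 and a = a
        and n = n and strat = strat]
    by (simp add: power_mult_distrib)
qed

section \<open>The increment estimate\<close>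

lemma lvl2_sum_normalized_second_moment_le:
  fixes q :: real
  assumes q: "q \<le> 1" and bm: "brownian_motion M d W" and ij: "i \<in> {1..d}" "j \<in> {1..d}"
    and st: "0 \<le> s" "s < t" "t \<le> 1" and \<delta>: "t - s \<le> \<delta>"
  shows "(\<integral>\<omega>. ((t - s) powr (-q) * lvl2_sum strat W i j s t n \<omega>)\<^sup>2 \<partial>M) \<le> 5 * \<delta> powr (2 - 2 * q)"
proof -
  have "(\<integral>\<omega>. ((t - s) powr (-q) * lvl2_sum strat W i j s t n \<omega>)\<^sup>2 \<partial>M) \<le> 5 * (t - s) powr (2 - 2 * q)"
    using lvl2_sum_scaled_second_moment(2)[OF bm ij st, of "(t - s) powr (-q)" strat n]
      powr_neg_times_square[of "t - s" q] st
    by simp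
  also have "\<dots> \<le> 5 * \<delta> powr (2 - 2 * q)"
    using st \<delta> q by (intro mult_left_mono powr_mono2) auto
  finally show ?thesis .
qed

lemma lvl2_sum_normalized_diff_second_moment_far:
  fixes q :: real
  assumes q: "1/2 \<le> q" "q \<le> 1"
    and bm: "brownian_motion M d W" and ij: "i \<in> {1..d}" "j \<in> {1..d}"
    and st: "0 \<le> s" "s < t" "t \<le> 1" and st': "0 \<le> s'" "s' < t'" "t' \<le> 1"
    and far: "min (t - s) (t' - s') \<le> 4 * (\<bar>s' - s\<bar> + \<bar>t' - t\<bar>)"
  shows "(\<integral>\<omega>. ((t - s) powr (-q) * lvl2_sum strat W i j s t n \<omega>
              - (t' - s') powr (-q) * lvl2_sum strat W i j s' t' n \<omega>)\<^sup>2 \<partial>M)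
    \<le> 60 * (\<bar>s' - s\<bar> + \<bar>t' - t\<bar>) powr (2 - 2 * q)"
proof -
  define a where "a = (t - s) powr (-q)"
  define b where "b = (t' - s') powr (-q)"
  define \<delta> where "\<delta> = \<bar>s' - s\<bar> + \<bar>t' - t\<bar>"
  have h: "t - s \<le> 5 * \<delta>" "t' - s' \<le> 5 * \<delta>"
    using far by (auto simp: \<delta>_def min_def abs_if split: if_splits)
  have "(a * (t - s) - b * (t' - s'))\<^sup>2 \<le> 2 * (a\<^sup>2 * (t - s)\<^sup>2 + b\<^sup>2 * (t' - s')\<^sup>2)"
    using square_add_le[of "a * (t - s)" "- b * (t' - s')"] by (simp add: power_mult_distrib)
  then have "(\<integral>\<omega>. (a * lvl2_sum strat W i j s t n \<omega> - b * lvl2_sum strat W i j s' t' n \<omega>)\<^sup>2 \<partial>M)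
      \<le> 6 * (a\<^sup>2 * (t - s)\<^sup>2 + b\<^sup>2 * (t' - s')\<^sup>2)"
    using lvl2_sum_lincomb_second_moment(2)[OF bm ij st st', where n = n and n' = n and a = a and b = b and strat = strat]
      grid_integral2_kernel_lincomb_le[OF st(2) st'(2), where n = n and n' = n and a = a and b = b and strat = strat]
    by linarith
  also have "\<dots> = 6 * ((t - s) powr (2 - 2 * q) + (t' - s') powr (2 - 2 * q))"
    using st st' by (simp add: a_def b_def powr_neg_times_square)
  also have "\<dots> \<le> 6 * (5 * \<delta> powr (2 - 2 * q) + 5 * \<delta> powr (2 - 2 * q))"
    using powr_le_five_times[OF _ h(1)] powr_le_five_times[OF _ h(2)] st st' q
    by (intro mult_left_mono add_mono) auto
  finally show ?thesis by (simp add: a_def b_def \<delta>_def)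
qed

lemma lvl2_sum_normalized_diff_second_moment_near:
  fixes q :: real
  assumes q: "1/2 \<le> q" "q \<le> 1"
    and bm: "brownian_motion M d W" and ij: "i \<in> {1..d}" "j \<in> {1..d}"
    and st: "0 \<le> s" "s < t" "t \<le> 1" and st': "0 \<le> s'" "s' < t'" "t' \<le> 1"
    and \<delta>: "0 < \<bar>s' - s\<bar> + \<bar>t' - t\<bar>"
    and near: "4 * (\<bar>s' - s\<bar> + \<bar>t' - t\<bar>) < t - s" "4 * (\<bar>s' - s\<bar> + \<bar>t' - t\<bar>) < t' - s'"
  shows "(\<integral>\<omega>. ((t - s) powr (-q) * lvl2_sum strat W i j s t n \<omega>
              - (t' - s') powr (-q) * lvl2_sum strat W i j s' t' n \<omega>)\<^sup>2 \<partial>M)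
    \<le> 25 * (\<bar>s' - s\<bar> + \<bar>t' - t\<bar>) powr (2 - 2 * q) + 16 / 2^n"
proof -
  define h where "h = t - s"
  define h' where "h' = t' - s'"
  define \<delta>' where "\<delta>' = \<bar>s' - s\<bar> + \<bar>t' - t\<bar>"
  define a where "a = h powr (-q)"
  define b where "b = h' powr (-q)"
  have h: "0 < h" "0 < h'" "h \<le> 1" "h' \<le> 1" using st st' by (auto simp: h_def h'_def)
  have hh: "\<bar>h - h'\<bar> \<le> \<delta>'" "\<delta>' \<le> h" "\<delta>' \<le> h'"
    using near \<delta> by (auto simp: h_def h'_def \<delta>'_def)
  have "0 < \<delta>'" using \<delta> by (simp add: \<delta>'_def)
  have trace: "(a * h - b * h')\<^sup>2 \<le> \<delta>' powr (2 - 2 * q)"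
    using powr_one_minus_diff_sq_le[OF \<open>0 < \<delta>'\<close> hh] h q by (simp add: a_def b_def powr_neg_times_self)
  have dyadic: "8 * (a\<^sup>2 * (h\<^sup>2 / 2^n) + b\<^sup>2 * (h'\<^sup>2 / 2^n)) \<le> 16 / 2^n"
  proof -
    have "a\<^sup>2 * h\<^sup>2 \<le> 1" "b\<^sup>2 * h'\<^sup>2 \<le> 1"
      using h q by (auto simp: a_def b_def powr_neg_times_square intro: powr_le1)
    then have "8 * (a\<^sup>2 * h\<^sup>2 + b\<^sup>2 * h'\<^sup>2) / 2^n \<le> 16 / 2^n"
      by (intro divide_right_mono) auto
    then show ?thesis by (simp add: add_divide_distrib)
  qed
  have shift: "a\<^sup>2 * ((\<bar>s - s'\<bar> + \<bar>t - t'\<bar>) * (max t t' - min s s')) \<le> 2 * \<delta>' powr (2 - 2 * q)"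
  proof -
    have "max t t' - min s s' \<le> h + \<delta>'" by (auto simp: h_def \<delta>'_def max_def min_def)
    then have "a\<^sup>2 * ((\<bar>s - s'\<bar> + \<bar>t - t'\<bar>) * (max t t' - min s s')) \<le> a\<^sup>2 * (\<delta>' * (h + \<delta>'))"
      using \<open>0 < \<delta>'\<close> by (intro mult_left_mono) (auto simp: \<delta>'_def abs_minus_commute)
    also have "\<dots> \<le> 2 * \<delta>' powr (2 - 2 * q)"
      unfolding a_def by (rule powr_neg_sq_times_le[OF \<open>0 < \<delta>'\<close> hh(2) q(1)])
    finally show ?thesis .
  qed
  have scale: "(a - b)\<^sup>2 * h'\<^sup>2 \<le> \<delta>' powr (2 - 2 * q)"
    unfolding a_def b_def using powr_neg_diff_sq_times_le[OF \<open>0 < \<delta>'\<close> hh] q by simp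
  have "(\<integral>\<omega>. (a * lvl2_sum strat W i j s t n \<omega> - b * lvl2_sum strat W i j s' t' n \<omega>)\<^sup>2 \<partial>M)
      \<le> (a * h - b * h')\<^sup>2 + 2 * (4 * (a\<^sup>2 * (h\<^sup>2 / 2^n) + b\<^sup>2 * (h'\<^sup>2 / 2^n)
        + a\<^sup>2 * ((\<bar>s - s'\<bar> + \<bar>t - t'\<bar>) * (max t t' - min s s')) + (a - b)\<^sup>2 * h'\<^sup>2))"
    using lvl2_sum_lincomb_second_moment(2)[OF bm ij st st', where n = n and n' = n and a = a and b = b and strat = strat]
      grid_integral2_kernel_lincomb_le_near[OF st(2) st'(2), where n = n and n' = n and a = a and b = b
        and strat = strat]
    unfolding h_def h'_def by linarith
  also have "\<dots> \<le> 25 * \<delta>' powr (2 - 2 * q) + 16 / 2^n"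
    using trace dyadic shift scale unfolding distrib_left by linarith
  finally show ?thesis by (simp add: a_def b_def h_def h'_def \<delta>'_def)
qed

lemma lvl2_sum_normalized_diff_second_moment:
  fixes q :: real
  assumes q: "1/2 \<le> q" "q \<le> 1"
    and bm: "brownian_motion M d W" and ij: "i \<in> {1..d}" "j \<in> {1..d}"
    and st: "0 \<le> s" "s < t" "t \<le> 1" and st': "0 \<le> s'" "s' < t'" "t' \<le> 1"
  shows "(\<integral>\<omega>. ((t - s) powr (-q) * lvl2_sum strat W i j s t n \<omega>
              - (t' - s') powr (-q) * lvl2_sum strat W i j s' t' n \<omega>)\<^sup>2 \<partial>M)
    \<le> 60 * (\<bar>s' - s\<bar> + \<bar>t' - t\<bar>) powr (2 - 2 * q) + 16 / 2^n"
proof -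
  define \<delta> where "\<delta> = \<bar>s' - s\<bar> + \<bar>t' - t\<bar>"
  have nonneg: "0 \<le> \<delta> powr (2 - 2 * q)" "0 \<le> (16::real) / 2^n" by simp_all
  consider (equal) "\<delta> = 0" | (far) "min (t - s) (t' - s') \<le> 4 * \<delta>"
    | (near) "0 < \<delta>" "4 * \<delta> < t - s" "4 * \<delta> < t' - s'"
    by (force simp: \<delta>_def)
  then show ?thesis
  proof cases
    case equal
    then have "s' = s" "t' = t" unfolding \<delta>_def by linarith+
    then show ?thesis by simp
  next
    case far
    then show ?thesis
      using lvl2_sum_normalized_diff_second_moment_far[OF q bm ij st st' far[unfolded \<delta>_def], of strat n] nonneg
      unfolding \<delta>_def by linarith
  next
    case near
    then show ?thesis
      using lvl2_sum_normalized_diff_second_moment_near[OF q bm ij st st' near[unfolded \<delta>_def], of strat n] nonneg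
      unfolding \<delta>_def by linarith
  qed
qed

definition normalized_lvl2_sum ::
  "real \<Rightarrow> bool \<Rightarrow> (nat \<Rightarrow> real \<Rightarrow> 'a \<Rightarrow> real) \<Rightarrow> nat \<Rightarrow> nat \<Rightarrow> real \<Rightarrow> real \<Rightarrow> nat \<Rightarrow> 'a \<Rightarrow> real" where
  "normalized_lvl2_sum p strat W i j s t n \<omega> =
     (if 0 \<le> s \<and> s < t \<and> t \<le> 1 then lvl2_sum strat W i j s t n \<omega> / (t - s) powr (2 / p) else 0)"

lemma normalized_lvl2_sum_measurable:
  assumes bm: "brownian_motion M d W" and ij: "i \<in> {1..d}" "j \<in> {1..d}"
  shows "normalized_lvl2_sum p strat W i j s t n \<in> borel_measurable M"
proof -
  have "normalized_lvl2_sum p strat W i j s t n = (if 0 \<le> s \<and> s < t \<and> t \<le> 1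
      then (\<lambda>\<omega>. lvl2_sum strat W i j s t n \<omega> / (t - s) powr (2 / p)) else (\<lambda>_. 0))"
    by (auto simp: normalized_lvl2_sum_def)
  then show ?thesis
    using lvl2_sum_measurable[OF bm ij, of s t strat n] by auto
qed

lemma AE_normalized_lvl2_sum_tendsto_Zproc:
  assumes bm: "brownian_motion M d W" and ij: "i \<in> {1..d}" "j \<in> {1..d}"
  shows "AE \<omega> in M. (\<lambda>n. normalized_lvl2_sum p strat W i j s t n \<omega>) \<longlonglongrightarrow> Zproc p strat W i j s t \<omega>"
proof (cases "0 \<le> s \<and> s < t \<and> t \<le> 1")
  case True
  then have "AE \<omega> in M. convergent (\<lambda>n. lvl2_sum strat W i j s t n \<omega>)"
    using lvl2_sum_AE_convergent[OF bm ij] by blast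
  then show ?thesis
  proof eventually_elim
    case (elim \<omega>)
    then have "(\<lambda>n. lvl2_sum strat W i j s t n \<omega>) \<longlonglongrightarrow> beta2 strat W i j s t \<omega>"
      unfolding beta2_def by (simp add: convergent_LIMSEQ_iff)
    then show ?case
      using True by (simp add: normalized_lvl2_sum_def Zproc_def tendsto_divide)
  qed
next
  case False
  then have "normalized_lvl2_sum p strat W i j s t n \<omega> = 0" "Zproc p strat W i j s t \<omega> = 0" for n \<omega>
    by (auto simp: normalized_lvl2_sum_def Zproc_def)
  then show ?thesis by simp
qed

lemma normalized_lvl2_sum_diff_second_moment:
  fixes strat :: bool and n :: nat
  assumes p: "2 \<le> p" "p \<le> 4"
    and bm: "brownian_motion M d W" and ij: "i \<in> {1..d}" "j \<in> {1..d}"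
    and st: "s \<in> {0..1}" "t \<in> {0..1}" "s' \<in> {0..1}" "t' \<in> {0..1}"
  defines "X \<equiv> \<lambda>\<omega>. normalized_lvl2_sum p strat W i j s t n \<omega> - normalized_lvl2_sum p strat W i j s' t' n \<omega>"
  shows "integrable M (\<lambda>\<omega>. (X \<omega>)\<^sup>2) \<and>
    (\<integral>\<omega>. (X \<omega>)\<^sup>2 \<partial>M) \<le> 60 * (\<bar>s' - s\<bar> + \<bar>t' - t\<bar>) powr (2 * (1 - 2 / p)) + 16 / 2^n"
proof -
  define q where "q = 2 / p"
  have q: "1/2 \<le> q" "q \<le> 1" using p by (auto simp: q_def field_simps)
  define \<delta> where "\<delta> = \<bar>s' - s\<bar> + \<bar>t' - t\<bar>"
  define g where "g = 2 - 2 * q"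
  have g: "2 * (1 - 2 / p) = g" by (simp add: g_def q_def)
  define a where "a = (t - s) powr (-q)"
  define b where "b = (t' - s') powr (-q)"
  have N: "normalized_lvl2_sum p strat W i j s t n \<omega> = (if s < t then a * lvl2_sum strat W i j s t n \<omega> else 0)"
    "normalized_lvl2_sum p strat W i j s' t' n \<omega> = (if s' < t' then b * lvl2_sum strat W i j s' t' n \<omega> else 0)"
    for \<omega>
    using st by (auto simp: normalized_lvl2_sum_def a_def b_def q_def powr_minus_divide)
  have one_sided: "integrable M (\<lambda>\<omega>. ((v - u) powr (-q) * lvl2_sum strat W i j u v n \<omega>)\<^sup>2) \<and>
      (\<integral>\<omega>. ((v - u) powr (-q) * lvl2_sum strat W i j u v n \<omega>)\<^sup>2 \<partial>M) \<le> 60 * \<delta> powr g + 16 / 2^n"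
    if uv: "0 \<le> u" "u < v" "v \<le> 1" "v - u \<le> \<delta>" for u v
  proof
    show "integrable M (\<lambda>\<omega>. ((v - u) powr (-q) * lvl2_sum strat W i j u v n \<omega>)\<^sup>2)"
      by (rule lvl2_sum_scaled_second_moment(1)[OF bm ij uv(1-3)])
    have "0 \<le> \<delta> powr g" "0 \<le> (16::real) / 2^n" by simp_all
    then show "(\<integral>\<omega>. ((v - u) powr (-q) * lvl2_sum strat W i j u v n \<omega>)\<^sup>2 \<partial>M) \<le> 60 * \<delta> powr g + 16 / 2^n"
      using lvl2_sum_normalized_second_moment_le[OF q(2) bm ij uv, of strat n] unfolding g_def by linarith
  qed
  consider (both) "s < t" "s' < t'" | (left) "s < t" "\<not> s' < t'" | (right) "\<not> s < t" "s' < t'"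
    | (none) "\<not> s < t" "\<not> s' < t'"
    by blast
  then show ?thesis
  proof cases
    case both
    then have X: "X = (\<lambda>\<omega>. a * lvl2_sum strat W i j s t n \<omega> - b * lvl2_sum strat W i j s' t' n \<omega>)"
      by (simp add: X_def N)
    show ?thesis
      unfolding X a_def b_def g g_def
      using lvl2_sum_lincomb_second_moment(1)[OF bm ij _ both(1) _ _ both(2)]
        lvl2_sum_normalized_diff_second_moment[OF q bm ij _ both(1) _ _ both(2)] st
      by simp
  next
    case left
    then have "t - s \<le> \<delta>" by (auto simp: \<delta>_def)
    then show ?thesis
      unfolding g \<delta>_def[symmetric] using one_sided[of s t] st left by (simp add: X_def N a_def)
  next
    case right
    then have "t' - s' \<le> \<delta>" by (auto simp: \<delta>_def)
    then show ?thesis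
      unfolding g \<delta>_def[symmetric] using one_sided[of s' t'] st right by (simp add: X_def N b_def)
  next
    case none
    then show ?thesis by (simp add: X_def N)
  qed
qed

lemma nn_integral_Zproc_diff_sq_le:
  assumes p: "2 \<le> p" "p \<le> 4"
    and bm: "brownian_motion M d W" and ij: "i \<in> {1..d}" "j \<in> {1..d}"
    and st: "s \<in> {0..1}" "t \<in> {0..1}" "s' \<in> {0..1}" "t' \<in> {0..1}"
  shows "(\<integral>\<^sup>+\<omega>. ennreal (\<bar>Zproc p strat W i j s t \<omega> - Zproc p strat W i j s' t' \<omega>\<bar>\<^sup>2) \<partial>M)
    \<le> ennreal (60 * (\<bar>s' - s\<bar> + \<bar>t' - t\<bar>) powr (2 * (1 - 2 / p)))"
proof -
  note sq = normalized_lvl2_sum_diff_second_moment[OF p bm ij st]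
  have lim: "AE \<omega> in M. (\<lambda>n. normalized_lvl2_sum p strat W i j s t n \<omega> - normalized_lvl2_sum p strat W i j s' t' n \<omega>)
      \<longlonglongrightarrow> Zproc p strat W i j s t \<omega> - Zproc p strat W i j s' t' \<omega>"
    using AE_normalized_lvl2_sum_tendsto_Zproc[OF bm ij, of p strat s t]
      AE_normalized_lvl2_sum_tendsto_Zproc[OF bm ij, of p strat s' t']
    by eventually_elim (rule tendsto_diff)
  have e: "(\<lambda>n. 16 / 2^n :: real) \<longlonglongrightarrow> 0"
    by (simp add: LIMSEQ_divide_realpow_zero)
  have "(\<integral>\<^sup>+\<omega>. ennreal ((Zproc p strat W i j s t \<omega> - Zproc p strat W i j s' t' \<omega>)\<^sup>2) \<partial>M)
    \<le> ennreal (60 * (\<bar>s' - s\<bar> + \<bar>t' - t\<bar>) powr (2 * (1 - 2 / p)))"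
    by (rule nn_integral_sq_le_if_AE_tendsto[OF _ lim _ _ e])
      (use sq normalized_lvl2_sum_measurable[OF bm ij] in auto)
  then show ?thesis by simp
qed

theorem lemma2p2:
  fixes p :: real
  assumes "2 < p" "p < 3"
  shows "\<exists>c::real. \<forall>(strat::bool) (d::nat) (M::'a measure) W i j s t s' t'.
    brownian_motion M d W \<longrightarrow> i \<in> {1..d} \<longrightarrow> j \<in> {1..d} \<longrightarrow>
    s \<in> {0..1} \<longrightarrow> t \<in> {0..1} \<longrightarrow> s' \<in> {0..1} \<longrightarrow> t' \<in> {0..1} \<longrightarrow>
    (\<integral>\<^sup>+ \<omega>. ennreal (\<bar>Zproc p strat W i j s t \<omega> - Zproc p strat W i j s' t' \<omega>\<bar>\<^sup>2) \<partial>M)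
      \<le> ennreal (c * (\<bar>s' - s\<bar> + \<bar>t' - t\<bar>) powr (2 * (1 - 2 / p)))"
  using assms by (intro exI[of _ 60] allI impI nn_integral_Zproc_diff_sq_le) auto

end
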